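(* Fix $y\in\mathbb{R}^d$, $k\in\mathbb{N}_0$ and measurable $g:\mathbb{R}^d\to\mathbb{R}$. Let $X,V$ be independent $\mathbb{R}^d$-valued random vectors, $Y=X+V$, where $P_V$ has a Lebesgue density $f_V\in C_0^k(\mathbb{R}^d;\mathbb{R})$ and $\varphi_V(\omega)\ne0$ for Lebesgue-a.e. $\omega$. Assume $\lambda_{g,V,y}(x)=g(x)f_V(y-x)\in\Xi^0(\mathbb{R}^d;\mathbb{C})$ and $\widetilde{\lambda}_{g,V,y}\in L^1(\mathbb{R}^d;\mathbb{C})$. Suppose there are finite signed Radon measures $\{\mu_\alpha:|\alpha|\le k\}$ on $\mathbb{R}^d$ such that \[ \mathcal{Q}_{g,V,y}(\omega)=\sum_{|\alpha|\le k}(i\omega)^\alpha\varphi_{\mu_\alpha}(\omega)\quad\text{for Lebesgue-a.e. }\omega,\qquad\varphi_\mu(\omega)=\int e^{i\omega^\top x}\,d\mu(x). \] Then for every $f\in\mathcal{A}_V(\mathbb{R}^d)$, \[ \mathcal{T}_{g,V,y}[f]=\sum_{|\alpha|\le k}\int_{\mathbb{R}^d}\partial^\alpha f(z)\,d\mu_\alpha(z), \] and in particular, whenever $f_Y(y)>0$, \[ \mathbb{E}[g(X)\mid Y=y]=\frac{1}{f_Y(y)}\sum_{|\alpha|\le k}\int_{\mathbb{R}^d}\partial^\alpha f_Y(z)\,d\mu_\alpha(z). \]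
   Context: $\widetilde\psi(\omega)=\int e^{i\omega^\top x}\psi(x)dx$; $\varphi_V(\omega)=\mathbb{E}[e^{i\omega^\top V}]$. $(i\omega)^\alpha=\prod_j(i\omega_j)^{\alpha_j}$ for a multi-index $\alpha$. $C_0^k$: $C^k$ functions whose derivatives of order $\le k$ vanish at infinity; $\Xi^0=C_0\cap L^1$. $\mathcal{Q}_{g,V,y}(\omega)=\widetilde{\lambda}_{g,V,y}(\omega)/\varphi_V(-\omega)$ where $\varphi_V(-\omega)\ne0$, and $0$ otherwise. $\mathcal{A}_V(\mathbb{R}^d)=\{f_V*\mu:\mu\text{ finite signed Radon measure}\}$ (representing measure unique) with norm $\|f_V*\mu\|_{\mathcal{A}_V}=\|\mu\|_{TV}$; $\mathcal{T}_{g,V,y}$ is the unique continuous linear functional on $\mathcal{A}_V$ with $\mathcal{T}_{g,V,y}[f_V*\mu]=\int\lambda_{g,V,y}\,d\mu$. $f_Y=f_V*P_X$ and $\mathbb{E}[g(X)\mid Y=y]=f_Y(y)^{-1}\int g(x)f_V(y-x)dP_X(x)$. *)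

theory Defs
  imports "HOL-Probability.Probability"
begin

type_synonym 'n multi_index = "'n \<Rightarrow> nat"

definition mi_abs :: "('n::finite) multi_index \<Rightarrow> nat" where
  "mi_abs \<alpha> = (\<Sum>j\<in>UNIV. \<alpha> j)"

definition multi_indices :: "nat \<Rightarrow> ('n::finite) multi_index set" where
  "multi_indices k = {\<alpha>. mi_abs \<alpha> \<le> k}"

definition partial :: "'n::finite \<Rightarrow> (real^'n \<Rightarrow> real) \<Rightarrow> real^'n \<Rightarrow> real" where
  "partial j f x = deriv (\<lambda>t. f (x + t *\<^sub>R axis j 1)) 0"

fun iter_partial :: "('n::finite) list \<Rightarrow> (real^'n \<Rightarrow> real) \<Rightarrow> real^'n \<Rightarrow> real" where
  "iter_partial [] f = f"
| "iter_partial (j # js) f = partial j (iter_partial js f)"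

definition coord_list :: "('n::finite) list" where
  "coord_list = (SOME xs. distinct xs \<and> set xs = UNIV)"

definition mderiv :: "('n::finite) multi_index \<Rightarrow> (real^'n \<Rightarrow> real) \<Rightarrow> real^'n \<Rightarrow> real" where
  "mderiv \<alpha> f = iter_partial (concat (map (\<lambda>j. replicate (\<alpha> j) j) coord_list)) f"

definition i_omega_pow :: "('n::finite) multi_index \<Rightarrow> real^'n \<Rightarrow> complex" where
  "i_omega_pow \<alpha> \<omega> = (\<Prod>j\<in>UNIV. (\<i> * complex_of_real (\<omega> $ j)) ^ (\<alpha> j))"

definition C0k :: "nat \<Rightarrow> (real^'n::finite \<Rightarrow> real) \<Rightarrow> bool" where
  "C0k k f \<longleftrightarrow>
     (\<forall>js::'n list. length js < k \<longrightarrow> (\<forall>x. iter_partial js f differentiable (at x))) \<and>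
     (\<forall>js::'n list. length js \<le> k \<longrightarrow>
        continuous_on UNIV (iter_partial js f) \<and> (iter_partial js f \<longlongrightarrow> 0) at_infinity)"

section \<open>Finite signed measures, represented as differences of finite Borel measures\<close>

definition fin_signed :: "'a::topological_space measure \<Rightarrow> 'a measure \<Rightarrow> bool" where
  "fin_signed Mp Mn \<longleftrightarrow> sets Mp = sets borel \<and> sets Mn = sets borel \<and>
     finite_measure Mp \<and> finite_measure Mn"

definition sint :: "'a measure \<Rightarrow> 'a measure \<Rightarrow> ('a \<Rightarrow> real) \<Rightarrow> real" where
  "sint Mp Mn h = (\<integral>x. h x \<partial>Mp) - (\<integral>x. h x \<partial>Mn)"

definition schar :: "(real^'n::finite) measure \<Rightarrow> (real^'n) measure \<Rightarrow> real^'n \<Rightarrow> complex" where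
  "schar Mp Mn \<omega> = (\<integral>x. cis (\<omega> \<bullet> x) \<partial>Mp) - (\<integral>x. cis (\<omega> \<bullet> x) \<partial>Mn)"

definition charf :: "(real^'n::finite) measure \<Rightarrow> real^'n \<Rightarrow> complex" where
  "charf P \<omega> = (\<integral>x. cis (\<omega> \<bullet> x) \<partial>P)"

definition fourier :: "(real^'n::finite \<Rightarrow> complex) \<Rightarrow> real^'n \<Rightarrow> complex" where
  "fourier \<psi> \<omega> = (\<integral>x. cis (\<omega> \<bullet> x) * \<psi> x \<partial>lborel)"

definition conv_signed :: "(real^'n::finite \<Rightarrow> real) \<Rightarrow> (real^'n) measure \<Rightarrow> (real^'n) measure \<Rightarrow> real^'n \<Rightarrow> real" where
  "conv_signed f Mp Mn z = sint Mp Mn (\<lambda>x. f (z - x))"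

definition conv_meas :: "(real^'n::finite \<Rightarrow> real) \<Rightarrow> (real^'n) measure \<Rightarrow> real^'n \<Rightarrow> real" where
  "conv_meas f P z = (\<integral>x. f (z - x) \<partial>P)"

definition lam :: "(real^'n::finite \<Rightarrow> real) \<Rightarrow> (real^'n \<Rightarrow> real) \<Rightarrow> real^'n \<Rightarrow> real^'n \<Rightarrow> real" where
  "lam g fV y x = g x * fV (y - x)"

definition Qfun :: "(real^'n::finite \<Rightarrow> real) \<Rightarrow> (real^'n \<Rightarrow> real) \<Rightarrow> (real^'n) measure \<Rightarrow> real^'n \<Rightarrow> real^'n \<Rightarrow> complex" where
  "Qfun g fV PV y \<omega> =
     (if charf PV (- \<omega>) \<noteq> 0
      then fourier (\<lambda>x. complex_of_real (lam g fV y x)) \<omega> / charf PV (- \<omega>) else 0)"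

text \<open>E[g(X) | Y = y] := f_Y(y)^{-1} \<integral> g(x) f_V(y - x) dP_X(x), with f_Y = f_V * P_X.\<close>
definition cond_exp_at :: "(real^'n::finite \<Rightarrow> real) \<Rightarrow> (real^'n \<Rightarrow> real) \<Rightarrow> (real^'n) measure \<Rightarrow> real^'n \<Rightarrow> real" where
  "cond_exp_at g fV PX y = (\<integral>x. g x * fV (y - x) \<partial>PX) / conv_meas fV PX y"

end

(*
  The heart of the proof is the pointwise identity

    lambda(a) = sum_alpha int d^alpha f_V(u - a) d mu_alpha(u),

  obtained by pairing both sides with the Gaussian kernels K(x) = exp (-|x - a|^2 / (2 e^2)).
  K is the Fourier integral of a Gaussian psi, so by Fubini's theorem the pairing of lambda with K
  is the integral of psi against the Fourier transform of lambda. Differentiating under the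
  integral sign, the pairing of the right-hand side with K is the integral of
  psi(w) (i w)^alpha phi_{mu_alpha}(w) against the Fourier transform of f_V at -w, which is
  phi_V(-w). As phi_V(-w) vanishes only on a null set, the hypothesis on Q makes the two integrands
  agree almost everywhere, and since the kernels form an approximate identity the two sides agree
  at a. Integrating the pointwise identity against a finite signed measure mu, exchanging the
  integrations and moving the derivatives onto f_V * mu gives T[f_V * mu]; the conditional
  expectation is the case mu = P_X.
*)

theory Submission
  imports Defs
begin

lemma integrable_pair_mult:
  fixes gA :: "'a \<Rightarrow> real" and gB :: "'b \<Rightarrow> real"
  assumes "sigma_finite_measure A" "sigma_finite_measure B" "integrable A gA" "integrable B gB"
  shows "integrable (A \<Otimes>\<^sub>M B) (\<lambda>p. gA (fst p) * gB (snd p))"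
proof -
  interpret A: sigma_finite_measure A by fact
  interpret B: sigma_finite_measure B by fact
  interpret pair_sigma_finite A B ..
  have [measurable]: "gA \<in> borel_measurable A" "gB \<in> borel_measurable B"
    using assms(3,4) by auto
  show ?thesis
  proof (rule Fubini_integrable)
    show "integrable A (\<lambda>x. \<integral>y. norm (gA (fst (x, y)) * gB (snd (x, y))) \<partial>B)"
      using assms(3) by (simp add: abs_mult)
  qed (use assms(4) in auto)
qed

lemma integrable_pair_product_bound:
  fixes f :: "'a \<Rightarrow> 'b \<Rightarrow> 'c::{banach, second_countable_topology}"
  assumes "sigma_finite_measure A" "sigma_finite_measure B"
    and "(\<lambda>p. f (fst p) (snd p)) \<in> borel_measurable (A \<Otimes>\<^sub>M B)"
    and bound: "\<And>x y. x \<in> space A \<Longrightarrow> y \<in> space B \<Longrightarrow> norm (f x y) \<le> gA x * gB y"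
    and "integrable A gA" "integrable B gB"
  shows "integrable (A \<Otimes>\<^sub>M B) (case_prod f)"
proof (rule Bochner_Integration.integrable_bound[OF integrable_pair_mult[OF assms(1,2,5,6)]])
  show "case_prod f \<in> borel_measurable (A \<Otimes>\<^sub>M B)"
    using assms(3) by (simp add: case_prod_beta')
  show "AE p in A \<Otimes>\<^sub>M B. norm (case_prod f p) \<le> norm (gA (fst p) * gB (snd p))"
    using bound by (intro AE_I2) (auto simp: space_pair_measure intro: order_trans[OF _ abs_ge_self])
qed

lemma Fubini_product_bound:
  fixes f :: "'a \<Rightarrow> 'b \<Rightarrow> 'c::{banach, second_countable_topology}"
  assumes "sigma_finite_measure A" "sigma_finite_measure B"
    and "(\<lambda>p. f (fst p) (snd p)) \<in> borel_measurable (A \<Otimes>\<^sub>M B)"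
    and "\<And>x y. x \<in> space A \<Longrightarrow> y \<in> space B \<Longrightarrow> norm (f x y) \<le> gA x * gB y"
    and "integrable A gA" "integrable B gB"
  shows "(\<integral>x. (\<integral>y. f x y \<partial>B) \<partial>A) = (\<integral>y. (\<integral>x. f x y \<partial>A) \<partial>B)"
    and "integrable A (\<lambda>x. \<integral>y. f x y \<partial>B)"
    and "integrable B (\<lambda>y. \<integral>x. f x y \<partial>A)"
proof -
  interpret A: sigma_finite_measure A by fact
  interpret B: sigma_finite_measure B by fact
  interpret pair_sigma_finite A B ..
  note int = integrable_pair_product_bound[OF assms]
  show "(\<integral>x. (\<integral>y. f x y \<partial>B) \<partial>A) = (\<integral>y. (\<integral>x. f x y \<partial>A) \<partial>B)"
    using Fubini_integral[OF int] by simp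
  show "integrable A (\<lambda>x. \<integral>y. f x y \<partial>B)"
    using integrable_fst[OF int] by simp
  show "integrable B (\<lambda>y. \<integral>x. f x y \<partial>A)"
    using integrable_snd[OF int] by simp
qed

lemma measurable_pair_sets_borel:
  assumes "sets A = sets borel" "sets B = sets borel"
  shows "measurable (A \<Otimes>\<^sub>M B) N = measurable (borel \<Otimes>\<^sub>M borel) N"
  by (rule measurable_cong_sets[OF sets_pair_measure_cong[OF assms] refl])

lemma borel_measurable_integral_param:
  fixes F :: "'a::second_countable_topology \<Rightarrow> 'b::second_countable_topology \<Rightarrow> 'c::{banach, second_countable_topology}"
  assumes "sigma_finite_measure N" "sets N = sets borel"
    and "(\<lambda>p. F (fst p) (snd p)) \<in> borel_measurable (borel \<Otimes>\<^sub>M borel)"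
  shows "(\<lambda>w. \<integral>v. F w v \<partial>N) \<in> borel_measurable borel"
proof -
  interpret sigma_finite_measure N by fact
  have "case_prod F \<in> borel_measurable (borel \<Otimes>\<^sub>M N)"
    using assms(3) measurable_pair_sets_borel[of borel N] assms(2) by (simp add: case_prod_beta')
  then show ?thesis
    by (rule borel_measurable_lebesgue_integral)
qed

lemma lborel_distr_reflect: "distr lborel borel (\<lambda>x. u - x) = (lborel :: 'a::euclidean_space measure)"
  by (subst lborel_affine[of "-1" u]) (auto simp: density_1)

lemma integral_lborel_reflect:
  fixes H :: "'a::euclidean_space \<Rightarrow> 'b::{banach, second_countable_topology}"
  assumes "H \<in> borel_measurable borel"
  shows "(\<integral>x. H x \<partial>lborel) = (\<integral>x. H (u - x) \<partial>lborel)"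
  using integral_distr[of "\<lambda>x. u - x" lborel borel H] assms by (simp add: lborel_distr_reflect)

lemma integrable_lborel_reflect:
  fixes H :: "'a::euclidean_space \<Rightarrow> 'b::{banach, second_countable_topology}"
  assumes "integrable lborel H"
  shows "integrable lborel (\<lambda>x. H (u - x))"
  using integrable_distr_eq[of "\<lambda>x. u - x" lborel borel H] assms by (simp add: lborel_distr_reflect)

lemma AE_lborel_uminus:
  assumes "AE w in (lborel::'a::euclidean_space measure). P w"
  shows "AE w in lborel. P (- w)"
proof -
  have "AE w in distr lborel borel (\<lambda>x::'a. 0 - x). P w"
    using assms by (simp only: lborel_distr_reflect)
  then have "AE w in lborel. P (0 - w)"
    by (rule AE_distrD[rotated]) simp
  then show ?thesis
    by simp
qed

lemma borel_measurable_cis [measurable]: "cis \<in> borel_measurable borel"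
  by (intro borel_measurable_continuous_onI continuous_intros)

lemma fin_signed_null_measure:
  "finite_measure N \<Longrightarrow> sets N = sets borel \<Longrightarrow> fin_signed N (null_measure borel)"
  by (simp add: fin_signed_def finite_measureI)

section \<open>Differentiation under the integral sign\<close>

lemma abs_difference_quotient_le:
  fixes \<phi> :: "real \<Rightarrow> real"
  assumes "\<And>s. (\<phi> has_real_derivative \<phi>' s) (at s)" "\<And>s. \<bar>\<phi>' s\<bar> \<le> B" "t \<noteq> 0"
  shows "\<bar>(\<phi> t - \<phi> 0) / t\<bar> \<le> B"
proof -
  have "norm (\<phi> t - \<phi> 0) \<le> B * norm (t - 0)"
    using assms(1,2) by (intro field_differentiable_bound[where S=UNIV and f'=\<phi>']) auto
  then show ?thesis
    using assms(3) by (simp add: abs_divide divide_le_eq)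
qed

text \<open>The difference quotients converge pointwise by differentiability and are dominated by
  \<open>b\<close> by the mean value inequality.\<close>
lemma has_real_derivative_integral_directional:
  fixes F D :: "'v::real_normed_vector \<Rightarrow> 'a \<Rightarrow> real" and e :: 'v
  assumes der: "\<And>u x. x \<in> space M \<Longrightarrow> ((\<lambda>t. F (u + t *\<^sub>R e) x) has_real_derivative D u x) (at 0)"
    and bound: "\<And>u x. x \<in> space M \<Longrightarrow> \<bar>D u x\<bar> \<le> b x"
    and "integrable M b"
    and F_integrable: "\<And>u. integrable M (F u)"
    and "\<And>u. D u \<in> borel_measurable M"
  shows "((\<lambda>t. \<integral>x. F (u + t *\<^sub>R e) x \<partial>M) has_real_derivative (\<integral>x. D u x \<partial>M)) (at 0)"
proof -
  define q where "q t x = (F (u + t *\<^sub>R e) x - F u x) / t" for t x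
  have q_tendsto: "((\<lambda>t. q t x) \<longlongrightarrow> D u x) (at 0)" if "x \<in> space M" for x
    using der[OF that, of u] by (simp add: has_field_derivative_iff q_def)
  have q_bound: "\<bar>q t x\<bar> \<le> b x" if t: "t \<noteq> 0" and x: "x \<in> space M" for t x
  proof -
    have "((\<lambda>t. F (u + t *\<^sub>R e) x) has_real_derivative D (u + s *\<^sub>R e) x) (at s)" for s
    proof -
      have "((\<lambda>t. F (u + (t + s) *\<^sub>R e) x) has_real_derivative D (u + s *\<^sub>R e) x) (at 0)"
        using der[OF x, of "u + s *\<^sub>R e"] by (simp add: algebra_simps)
      then show ?thesis
        using DERIV_shift[of "\<lambda>t. F (u + t *\<^sub>R e) x" "D (u + s *\<^sub>R e) x" 0 s] by simp
    qed
    from abs_difference_quotient_le[where \<phi>="\<lambda>t. F (u + t *\<^sub>R e) x" and \<phi>'="\<lambda>s. D (u + s *\<^sub>R e) x",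
        OF this bound[OF x] t]
    show ?thesis
      by (simp add: q_def)
  qed
  have "((\<lambda>t. \<integral>x. q t x \<partial>M) \<longlongrightarrow> (\<integral>x. D u x \<partial>M)) (at 0)"
    unfolding tendsto_at_iff_sequentially
  proof (intro allI impI)
    fix X :: "nat \<Rightarrow> real"
    assume X: "\<forall>i. X i \<in> UNIV - {0}" "X \<longlonglongrightarrow> 0"
    show "((\<lambda>t. \<integral>x. q t x \<partial>M) \<circ> X) \<longlonglongrightarrow> (\<integral>x. D u x \<partial>M)"
      unfolding o_def
    proof (rule integral_dominated_convergence[where w=b])
      show "AE x in M. (\<lambda>n. q (X n) x) \<longlonglongrightarrow> D u x"
        using q_tendsto X by (auto simp: tendsto_at_iff_sequentially o_def)
      show "AE x in M. norm (q (X n) x) \<le> b x" for n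
        using q_bound X by auto
      show "(\<lambda>x. q (X n) x) \<in> borel_measurable M" for n
        unfolding q_def using F_integrable by measurable
    qed (use assms in auto)
  qed
  moreover have "(\<integral>x. q t x \<partial>M) = ((\<integral>x. F (u + t *\<^sub>R e) x \<partial>M) - (\<integral>x. F u x \<partial>M)) / t" for t
    using F_integrable by (simp add: q_def)
  ultimately show ?thesis
    by (simp add: has_field_derivative_iff)
qed

section \<open>Convolution of bounded functions with finite measures\<close>

definition Cbk :: "nat \<Rightarrow> (real^'n::finite \<Rightarrow> real) \<Rightarrow> bool" where
  "Cbk k f \<longleftrightarrow>
     (\<forall>js::'n list. length js < k \<longrightarrow> (\<forall>x. iter_partial js f differentiable (at x))) \<and>
     (\<forall>js::'n list. length js \<le> k \<longrightarrow>
        continuous_on UNIV (iter_partial js f) \<and> bounded (range (iter_partial js f)))"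

lemma bounded_range_if_tendsto_0_at_infinity:
  fixes f :: "'a::{heine_borel,real_normed_vector} \<Rightarrow> real"
  assumes f: "continuous_on UNIV f" and "(f \<longlongrightarrow> 0) at_infinity"
  shows "bounded (range f)"
proof -
  from assms(2) have "eventually (\<lambda>x. dist (f x) 0 < 1) at_infinity"
    by (rule tendstoD) simp
  then obtain R where R: "\<And>x. norm x \<ge> R \<Longrightarrow> \<bar>f x\<bar> < 1"
    by (auto simp: eventually_at_infinity)
  have "compact (f ` cball 0 R)"
    by (intro compact_continuous_image continuous_on_subset[OF f]) auto
  then obtain B where B: "\<forall>x\<in>cball 0 R. \<bar>f x\<bar> \<le> B"
    by (auto dest!: compact_imp_bounded simp: bounded_real)
  have "\<bar>f x\<bar> \<le> max B 1" for x
    using R[of x] B[rule_format, of x] by (cases "norm x \<ge> R") auto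
  then show ?thesis
    unfolding bounded_real by blast
qed

lemma C0k_imp_Cbk: "C0k k f \<Longrightarrow> Cbk k f"
  unfolding C0k_def Cbk_def using bounded_range_if_tendsto_0_at_infinity by blast

lemma Cbk_continuous: "Cbk k f \<Longrightarrow> length js \<le> k \<Longrightarrow> continuous_on UNIV (iter_partial js f)"
  and Cbk_bounded: "Cbk k f \<Longrightarrow> length js \<le> k \<Longrightarrow> bounded (range (iter_partial js f))"
  and Cbk_differentiable: "Cbk k f \<Longrightarrow> length js < k \<Longrightarrow> iter_partial js f differentiable (at x)"
  by (auto simp: Cbk_def)

lemma partial_has_real_derivative:
  fixes f :: "real^'n::finite \<Rightarrow> real"
  assumes "f differentiable (at p)"
  shows "((\<lambda>t. f (p + t *\<^sub>R axis j 1)) has_real_derivative partial j f p) (at 0)"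
proof -
  have "(\<lambda>t::real. p + t *\<^sub>R axis j 1) differentiable (at 0)"
    by (intro derivative_intros)
  moreover have "f differentiable (at (p + 0 *\<^sub>R axis j 1))"
    using assms by simp
  ultimately have "(\<lambda>t. f (p + t *\<^sub>R axis j 1)) differentiable (at 0)"
    by (rule differentiable_chain_at[unfolded o_def])
  then show ?thesis
    unfolding partial_def by (simp add: DERIV_deriv_iff_real_differentiable)
qed

lemma integrable_bounded_continuous:
  fixes h :: "'a::euclidean_space \<Rightarrow> real"
  assumes "finite_measure N" "sets N = sets borel"
    and h: "continuous_on UNIV h" "bounded (range h)"
  shows "integrable N h"
proof -
  interpret finite_measure N by fact
  obtain B where "\<And>x. \<bar>h x\<bar> \<le> B"
    using h(2) by (auto simp: bounded_real)
  moreover have "h \<in> borel_measurable N"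
    using borel_measurable_continuous_onI[OF h(1)] assms(2) by (simp cong: measurable_cong_sets)
  ultimately show ?thesis
    by (intro integrable_const_bound[where B=B]) auto
qed

lemma continuous_on_bounded_translate:
  fixes h :: "'a::real_normed_vector \<Rightarrow> real"
  assumes "continuous_on UNIV h" "bounded (range h)"
  shows "continuous_on UNIV (\<lambda>x. h (u - x))" "bounded (range (\<lambda>x. h (u - x)))"
    and "continuous_on UNIV (\<lambda>x. h (x - u))" "bounded (range (\<lambda>x. h (x - u)))"
proof -
  have "continuous_on UNIV (\<lambda>x. u - x)" "continuous_on UNIV (\<lambda>x. x - u)"
    by (intro continuous_intros)+
  then show "continuous_on UNIV (\<lambda>x. h (u - x))" "continuous_on UNIV (\<lambda>x. h (x - u))"
    by (auto intro: continuous_on_compose2[OF assms(1)])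
  show "bounded (range (\<lambda>x. h (u - x)))" "bounded (range (\<lambda>x. h (x - u)))"
    by (auto intro: bounded_subset[OF assms(2)])
qed

lemma integrable_translate:
  fixes h :: "'a::euclidean_space \<Rightarrow> real"
  assumes "finite_measure N" "sets N = sets borel" "continuous_on UNIV h" "bounded (range h)"
  shows "integrable N (\<lambda>x. h (u - x))" "integrable N (\<lambda>x. h (x - u))"
  using assms continuous_on_bounded_translate[OF assms(3,4)]
  by (auto intro: integrable_bounded_continuous)

lemma continuous_on_integral_translate:
  fixes h :: "'a::euclidean_space \<Rightarrow> real"
  assumes N: "finite_measure N" "sets N = sets borel"
    and h: "continuous_on UNIV h" "bounded (range h)"
  shows "continuous_on UNIV (\<lambda>x. \<integral>u. h (u - x) \<partial>N)"
proof -
  interpret finite_measure N by fact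
  obtain B where B: "\<And>x. \<bar>h x\<bar> \<le> B"
    using h(2) by (auto simp: bounded_real)
  have "isCont (\<lambda>x. \<integral>u. h (u - x) \<partial>N) a" for a
  proof (rule continuous_at_sequentiallyI)
    fix X assume X: "X \<longlonglongrightarrow> a"
    show "(\<lambda>n. \<integral>u. h (u - X n) \<partial>N) \<longlonglongrightarrow> (\<integral>u. h (u - a) \<partial>N)"
    proof (rule integral_dominated_convergence[where w="\<lambda>_. B"])
      show "AE u in N. (\<lambda>n. h (u - X n)) \<longlonglongrightarrow> h (u - a)"
        using h(1) X
        by (intro AE_I2 isCont_tendsto_compose[where g=h] tendsto_intros)
          (auto simp: continuous_on_eq_continuous_at)
    qed (use B integrable_translate(2)[OF N h] in \<open>auto simp: borel_measurable_integrable\<close>)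
  qed
  then show ?thesis by (simp add: continuous_at_imp_continuous_on)
qed

lemma bounded_integral_translate:
  fixes h :: "'a::euclidean_space \<Rightarrow> real"
  assumes N: "finite_measure N" "sets N = sets borel"
    and h: "continuous_on UNIV h" "bounded (range h)"
  shows "bounded (range (\<lambda>x. \<integral>u. h (u - x) \<partial>N))"
proof -
  interpret finite_measure N by fact
  obtain B where B: "\<And>x. \<bar>h x\<bar> \<le> B"
    using h(2) by (auto simp: bounded_real)
  have "\<bar>\<integral>u. h (u - x) \<partial>N\<bar> \<le> B * measure N (space N)" for x
  proof -
    have "\<bar>\<integral>u. h (u - x) \<partial>N\<bar> \<le> (\<integral>u. \<bar>h (u - x)\<bar> \<partial>N)"
      using integral_norm_bound[of N "\<lambda>u. h (u - x)"] by simp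
    also have "\<dots> \<le> (\<integral>u. B \<partial>N)"
      using B integrable_translate(2)[OF N h] by (intro integral_mono) auto
    finally show ?thesis by (simp add: mult.commute)
  qed
  then show ?thesis
    unfolding bounded_real by blast
qed

lemma bounded_sum_comp:
  fixes f :: "'i \<Rightarrow> 'a \<Rightarrow> 'b::real_normed_vector"
  assumes "finite A" "\<And>i. i \<in> A \<Longrightarrow> bounded (f i ` S)"
  shows "bounded ((\<lambda>x. \<Sum>i\<in>A. f i x) ` S)"
  using assms by (induction A rule: finite_induct) (auto intro: bounded_plus_comp bounded_subset[of "{0}"])

lemma has_real_derivative_integral_translate:
  fixes h :: "real^'n::finite \<Rightarrow> real"
  assumes N: "finite_measure N" "sets N = sets borel"
    and h_differentiable: "\<And>x. h differentiable (at x)"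
    and h: "continuous_on UNIV h" "bounded (range h)"
    and dh: "continuous_on UNIV (partial j h)" "bounded (range (partial j h))"
  shows "((\<lambda>t. \<integral>x. h (u + t *\<^sub>R axis j 1 - x) \<partial>N) has_real_derivative
          (\<integral>x. partial j h (u - x) \<partial>N)) (at 0)"
proof -
  interpret finite_measure N by fact
  obtain B where B: "\<And>x. \<bar>partial j h x\<bar> \<le> B"
    using dh(2) by (auto simp: bounded_real)
  have "((\<lambda>t. \<integral>x. (\<lambda>u x. h (u - x)) (u + t *\<^sub>R axis j 1) x \<partial>N) has_real_derivative
      (\<integral>x. (\<lambda>u x. partial j h (u - x)) u x \<partial>N)) (at 0)"
  proof (rule has_real_derivative_integral_directional[where b="\<lambda>_. B"])
    fix u x
    show "((\<lambda>t. (\<lambda>u x. h (u - x)) (u + t *\<^sub>R axis j 1) x) has_real_derivative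
        (\<lambda>u x. partial j h (u - x)) u x) (at 0)"
      using partial_has_real_derivative[OF h_differentiable, of "u - x" j]
      by (simp add: algebra_simps)
  qed (use B integrable_translate(1)[OF N h] integrable_translate(1)[OF N dh] in
    \<open>auto simp: borel_measurable_integrable\<close>)
  then show ?thesis by simp
qed

lemma iter_partial_conv_signed:
  fixes f :: "real^'n::finite \<Rightarrow> real"
  assumes N: "fin_signed N1 N2" and f: "Cbk k f" and "length js \<le> k"
  shows "iter_partial js (conv_signed f N1 N2) = conv_signed (iter_partial js f) N1 N2"
  using \<open>length js \<le> k\<close>
proof (induction js)
  case (Cons j js)
  let ?g = "iter_partial js f"
  have g: "\<And>x. ?g differentiable (at x)" "continuous_on UNIV ?g" "bounded (range ?g)"
    and dg: "continuous_on UNIV (partial j ?g)" "bounded (range (partial j ?g))"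
    using Cons.prems Cbk_continuous[OF f, of "j # js"] Cbk_bounded[OF f, of "j # js"]
      Cbk_continuous[OF f, of js] Cbk_bounded[OF f, of js] Cbk_differentiable[OF f, of js]
    by auto
  have "finite_measure N1" "sets N1 = sets borel" "finite_measure N2" "sets N2 = sets borel"
    using N by (auto simp: fin_signed_def)
  then have "((\<lambda>t. conv_signed ?g N1 N2 (u + t *\<^sub>R axis j 1)) has_real_derivative
      conv_signed (partial j ?g) N1 N2 u) (at 0)" for u
    unfolding conv_signed_def sint_def
    by (intro DERIV_diff has_real_derivative_integral_translate g dg)
  then have "partial j (conv_signed ?g N1 N2) = conv_signed (partial j ?g) N1 N2"
    unfolding partial_def[of j "conv_signed ?g N1 N2"] by (auto intro: DERIV_imp_deriv)
  then show ?case
    using Cons by simp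
qed simp

lemma Fubini_translate:
  fixes \<phi> :: "'a::euclidean_space \<Rightarrow> real"
  assumes A: "finite_measure A" "sets A = sets borel" and B: "finite_measure B" "sets B = sets borel"
    and \<phi>: "continuous_on UNIV \<phi>" "bounded (range \<phi>)"
  shows "(\<integral>u. (\<integral>x. \<phi> (u - x) \<partial>B) \<partial>A) = (\<integral>x. (\<integral>u. \<phi> (u - x) \<partial>A) \<partial>B)"
    and "integrable A (\<lambda>u. \<integral>x. \<phi> (u - x) \<partial>B)"
    and "integrable B (\<lambda>x. \<integral>u. \<phi> (u - x) \<partial>A)"
proof -
  interpret A: finite_measure A by fact
  interpret B: finite_measure B by fact
  obtain C where C: "\<And>x. \<bar>\<phi> x\<bar> \<le> C"
    using \<phi>(2) by (auto simp: bounded_real)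
  have [measurable]: "\<phi> \<in> borel_measurable borel"
    by (rule borel_measurable_continuous_onI[OF \<phi>(1)])
  have "(\<lambda>p. \<phi> (fst p - snd p)) \<in> borel_measurable (A \<Otimes>\<^sub>M B)"
    unfolding measurable_pair_sets_borel[OF A(2) B(2)] by measurable
  note Fubini = Fubini_product_bound[where f="\<lambda>u x. \<phi> (u - x)" and gA="\<lambda>_. C" and gB="\<lambda>_. 1",
      OF A.sigma_finite_measure_axioms B.sigma_finite_measure_axioms this]
  show "(\<integral>u. (\<integral>x. \<phi> (u - x) \<partial>B) \<partial>A) = (\<integral>x. (\<integral>u. \<phi> (u - x) \<partial>A) \<partial>B)"
    and "integrable A (\<lambda>u. \<integral>x. \<phi> (u - x) \<partial>B)"
    and "integrable B (\<lambda>x. \<integral>u. \<phi> (u - x) \<partial>A)"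
    using C by (auto intro: Fubini)
qed

lemma sint_translate_swap:
  fixes \<phi> :: "'a::euclidean_space \<Rightarrow> real"
  assumes A: "fin_signed A1 A2" and B: "fin_signed B1 B2"
    and \<phi>: "continuous_on UNIV \<phi>" "bounded (range \<phi>)"
  shows "sint A1 A2 (\<lambda>u. sint B1 B2 (\<lambda>x. \<phi> (u - x))) = sint B1 B2 (\<lambda>x. sint A1 A2 (\<lambda>u. \<phi> (u - x)))"
proof -
  have A1: "finite_measure A1" "sets A1 = sets borel" and A2: "finite_measure A2" "sets A2 = sets borel"
    and B1: "finite_measure B1" "sets B1 = sets borel" and B2: "finite_measure B2" "sets B2 = sets borel"
    using A B by (auto simp: fin_signed_def)
  show ?thesis
    unfolding sint_def
    using Fubini_translate[OF A1 B1 \<phi>] Fubini_translate[OF A1 B2 \<phi>]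
      Fubini_translate[OF A2 B1 \<phi>] Fubini_translate[OF A2 B2 \<phi>]
    by (simp add: Bochner_Integration.integral_diff)
qed

lemma distinct_coord_list: "distinct (coord_list :: ('n::finite) list)"
  and set_coord_list: "set (coord_list :: ('n::finite) list) = UNIV"
proof -
  obtain xs :: "'n list" where "distinct xs \<and> set xs = UNIV"
    using finite_distinct_list[OF finite_class.finite_UNIV] by metis
  then have "distinct (coord_list :: 'n list) \<and> set (coord_list :: 'n list) = UNIV"
    unfolding coord_list_def by (rule someI)
  then show "distinct (coord_list :: 'n list)" "set (coord_list :: 'n list) = UNIV"
    by auto
qed

definition mi_list :: "('n::finite) multi_index \<Rightarrow> 'n list" where
  "mi_list \<alpha> = concat (map (\<lambda>j. replicate (\<alpha> j) j) coord_list)"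

lemma mderiv_eq_iter_partial: "mderiv \<alpha> f = iter_partial (mi_list \<alpha>) f"
  by (simp add: mderiv_def mi_list_def)

lemma length_mi_list: "length (mi_list \<alpha>) = mi_abs \<alpha>"
proof -
  have "length (mi_list \<alpha>) = sum_list (map \<alpha> coord_list)"
    by (simp add: mi_list_def length_concat o_def)
  also have "\<dots> = sum \<alpha> (set coord_list)"
    by (intro sum_list_distinct_conv_sum_set distinct_coord_list)
  finally show ?thesis
    by (simp add: mi_abs_def set_coord_list)
qed

lemma length_mi_list_le: "\<alpha> \<in> multi_indices k \<Longrightarrow> length (mi_list \<alpha>) \<le> k"
  by (simp add: length_mi_list multi_indices_def)

lemma finite_multi_indices: "finite (multi_indices k :: ('n::finite) multi_index set)"
proof (rule finite_subset)
  show "multi_indices k \<subseteq> {\<alpha>::'n multi_index. \<forall>j. \<alpha> j \<in> {..k}}"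
  proof (intro subsetI CollectI allI)
    fix \<alpha> :: "'n multi_index" and j
    assume "\<alpha> \<in> multi_indices k"
    then show "\<alpha> j \<in> {..k}"
      using member_le_sum[of j UNIV \<alpha>] by (simp add: multi_indices_def mi_abs_def)
  qed
  show "finite {\<alpha>::'n multi_index. \<forall>j. \<alpha> j \<in> {..k}}"
    using finite_PiE[OF finite_class.finite_UNIV, of "\<lambda>_. {..k}"] by (simp add: PiE_UNIV_domain Pi_def)
qed

definition i_omega_list :: "'n list \<Rightarrow> real^'n::finite \<Rightarrow> complex" where
  "i_omega_list js w = (\<Prod>j\<leftarrow>js. \<i> * complex_of_real (w $ j))"

lemma i_omega_list_Nil [simp]: "i_omega_list [] w = 1"
  and i_omega_list_Cons [simp]: "i_omega_list (j # js) w = \<i> * complex_of_real (w $ j) * i_omega_list js w"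
  by (simp_all add: i_omega_list_def)

lemma borel_measurable_i_omega_list [measurable]: "i_omega_list js \<in> borel_measurable borel"
  by (induction js) simp_all

lemma norm_i_omega_list_le: "norm (i_omega_list js w) \<le> (1 + norm w) ^ length js"
proof (induction js)
  case (Cons j js)
  have "norm (i_omega_list (j # js) w) = \<bar>w $ j\<bar> * norm (i_omega_list js w)"
    by (simp add: norm_mult)
  also have "\<dots> \<le> (1 + norm w) * (1 + norm w) ^ length js"
    using component_le_norm_cart[of w j] by (intro mult_mono Cons.IH) auto
  finally show ?case by simp
qed simp

lemma i_omega_pow_eq_i_omega_list:
  fixes \<alpha> :: "('n::finite) multi_index"
  shows "i_omega_pow \<alpha> = i_omega_list (mi_list \<alpha>)"
proof
  fix w :: "real^'n"
  have "i_omega_list (concat (map (\<lambda>j. replicate (\<alpha> j) j) js)) w =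
      (\<Prod>j\<leftarrow>js. (\<i> * complex_of_real (w $ j)) ^ \<alpha> j)" for js
    by (induction js) (simp_all add: i_omega_list_def)
  then have "i_omega_list (mi_list \<alpha>) w = (\<Prod>j\<leftarrow>coord_list. (\<i> * complex_of_real (w $ j)) ^ \<alpha> j)"
    by (simp add: mi_list_def)
  also have "\<dots> = (\<Prod>j\<in>set coord_list. (\<i> * complex_of_real (w $ j)) ^ \<alpha> j)"
    by (intro prod.distinct_set_conv_list[symmetric] distinct_coord_list)
  finally show "i_omega_pow \<alpha> w = i_omega_list (mi_list \<alpha>) w"
    by (simp add: i_omega_pow_def set_coord_list)
qed

lemma borel_measurable_i_omega_pow [measurable]: "i_omega_pow \<alpha> \<in> borel_measurable borel"
  by (simp add: i_omega_pow_eq_i_omega_list)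

lemma norm_i_omega_pow_le:
  assumes "\<alpha> \<in> multi_indices k"
  shows "norm (i_omega_pow \<alpha> w) \<le> (1 + norm w) ^ k"
proof -
  have "norm (i_omega_pow \<alpha> w) \<le> (1 + norm w) ^ length (mi_list \<alpha>)"
    by (simp add: i_omega_pow_eq_i_omega_list norm_i_omega_list_le)
  also have "\<dots> \<le> (1 + norm w) ^ k"
    by (intro power_increasing length_mi_list_le assms) auto
  finally show ?thesis .
qed

lemma borel_measurable_fourier [measurable]:
  assumes [measurable]: "\<psi> \<in> borel_measurable borel"
  shows "fourier \<psi> \<in> borel_measurable borel"
  unfolding fourier_def[abs_def]
  by (rule borel_measurable_integral_param[OF lborel.sigma_finite_measure_axioms]) auto

lemma norm_fourier_le: "norm (fourier \<psi> w) \<le> (\<integral>x. norm (\<psi> x) \<partial>lborel)"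
  unfolding fourier_def using integral_norm_bound[of lborel "\<lambda>x. cis (w \<bullet> x) * \<psi> x"]
  by (simp add: norm_mult)

lemma fourier_reflect:
  assumes [measurable]: "f \<in> borel_measurable borel"
  shows "fourier (\<lambda>x. f (u - x)) w = cis (w \<bullet> u) * fourier f (- w)"
proof -
  have "fourier (\<lambda>x. f (u - x)) w = (\<integral>x. cis (w \<bullet> (u - x)) * f (u - (u - x)) \<partial>lborel)"
    unfolding fourier_def by (rule integral_lborel_reflect) measurable
  also have "\<dots> = (\<integral>x. cis (w \<bullet> (u - x)) * f x \<partial>lborel)"
    by simp
  also have "\<dots> = (\<integral>x. cis (w \<bullet> u) * (cis (- w \<bullet> x) * f x) \<partial>lborel)"
  proof -
    have "cis (w \<bullet> (u - x)) = cis (w \<bullet> u) * cis (- w \<bullet> x)" for x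
      by (subst cis_mult) (simp add: inner_diff_right)
    then show ?thesis
      by (simp add: mult.assoc)
  qed
  finally show ?thesis
    by (simp add: fourier_def)
qed

lemma borel_measurable_char_integral:
  assumes "finite_measure N" "sets N = sets borel"
  shows "(\<lambda>w. \<integral>u. cis (w \<bullet> u) \<partial>N) \<in> borel_measurable (borel :: 'a::euclidean_space measure)"
  using assms by (intro borel_measurable_integral_param finite_measure.sigma_finite_measure) auto

lemma norm_char_integral_le:
  assumes "finite_measure N"
  shows "norm (\<integral>u. cis (w \<bullet> u) \<partial>N) \<le> measure N (space N)"
  using integral_norm_bound[of N "\<lambda>u. cis (w \<bullet> u)"] assms by (simp add: finite_measure.emeasure_eq_measure)

lemma Fubini_cis_integral:
  fixes P :: "'a::euclidean_space \<Rightarrow> complex"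
  assumes N: "finite_measure N" "sets N = sets borel"
    and [measurable]: "P \<in> borel_measurable borel" and P: "integrable lborel (\<lambda>w. norm (P w))"
  shows "(\<integral>u. (\<integral>w. cis (w \<bullet> u) * P w \<partial>lborel) \<partial>N) = (\<integral>w. P w * (\<integral>u. cis (w \<bullet> u) \<partial>N) \<partial>lborel)"
    and "integrable N (\<lambda>u. \<integral>w. cis (w \<bullet> u) * P w \<partial>lborel)"
proof -
  interpret finite_measure N by fact
  have "(\<lambda>p. cis (snd p \<bullet> fst p) * P (snd p)) \<in> borel_measurable (N \<Otimes>\<^sub>M lborel)"
    unfolding measurable_pair_sets_borel[OF N(2) sets_lborel] by measurable
  note Fubini = Fubini_product_bound[where f="\<lambda>u w. cis (w \<bullet> u) * P w" and gA="\<lambda>_. 1"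
      and gB="\<lambda>w. norm (P w)", OF sigma_finite_measure_axioms lborel.sigma_finite_measure_axioms this]
  have "(\<integral>u. (\<integral>w. cis (w \<bullet> u) * P w \<partial>lborel) \<partial>N) = (\<integral>w. (\<integral>u. cis (w \<bullet> u) * P w \<partial>N) \<partial>lborel)"
    using P by (intro Fubini) (auto simp: norm_mult)
  then show "(\<integral>u. (\<integral>w. cis (w \<bullet> u) * P w \<partial>lborel) \<partial>N) = (\<integral>w. P w * (\<integral>u. cis (w \<bullet> u) \<partial>N) \<partial>lborel)"
    by (simp add: mult.commute)
  show "integrable N (\<lambda>u. \<integral>w. cis (w \<bullet> u) * P w \<partial>lborel)"
    using P by (intro Fubini) (auto simp: norm_mult)
qed

lemma has_real_derivative_Re_cis:
  "((\<lambda>t. Re (cis (a + t * b) * c)) has_real_derivative Re (cis a * (\<i> * complex_of_real b) * c)) (at 0)"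
proof -
  have "((\<lambda>t. cos (a + t * b) * Re c - sin (a + t * b) * Im c) has_real_derivative
      - sin (a + 0 * b) * b * Re c - cos (a + 0 * b) * b * Im c) (at 0)"
    by (intro derivative_eq_intros refl) auto
  moreover have "- sin (a + 0 * b) * b * Re c - cos (a + 0 * b) * b * Im c =
      Re (cis a * (\<i> * complex_of_real b) * c)"
    by (simp add: cis.code algebra_simps)
  ultimately show ?thesis
    by (simp add: cis.code)
qed

lemma partial_Re_fourier_integral:
  fixes q :: "real^'n::finite \<Rightarrow> complex"
  assumes [measurable]: "q \<in> borel_measurable borel"
    and dom: "integrable lborel (\<lambda>w. (1 + norm w) * norm (q w))"
  shows "partial j (\<lambda>u. \<integral>w. Re (cis (w \<bullet> u) * q w) \<partial>lborel) =
         (\<lambda>u. \<integral>w. Re (cis (w \<bullet> u) * (\<i> * complex_of_real (w $ j)) * q w) \<partial>lborel)"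
proof
  fix u
  let ?F = "\<lambda>u w. Re (cis (w \<bullet> u) * q w)"
  have "((\<lambda>t. \<integral>w. ?F (u + t *\<^sub>R axis j 1) w \<partial>lborel) has_real_derivative
      (\<integral>w. Re (cis (w \<bullet> u) * (\<i> * complex_of_real (w $ j)) * q w) \<partial>lborel)) (at 0)"
  proof (rule has_real_derivative_integral_directional[where b="\<lambda>w. (1 + norm w) * norm (q w)"])
    fix u w
    show "((\<lambda>t. ?F (u + t *\<^sub>R axis j 1) w) has_real_derivative
        Re (cis (w \<bullet> u) * (\<i> * complex_of_real (w $ j)) * q w)) (at 0)"
      using has_real_derivative_Re_cis[of "w \<bullet> u" "w $ j" "q w"]
      by (simp add: inner_add_right cart_eq_inner_axis[symmetric] inner_commute mult_ac)
    have "\<bar>Re (cis (w \<bullet> u) * (\<i> * complex_of_real (w $ j)) * q w)\<bar> \<le>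
        norm (cis (w \<bullet> u) * (\<i> * complex_of_real (w $ j)) * q w)"
      by (rule abs_Re_le_cmod)
    also have "\<dots> = \<bar>w $ j\<bar> * norm (q w)"
      by (simp add: norm_mult)
    also have "\<dots> \<le> (1 + norm w) * norm (q w)"
      using component_le_norm_cart[of w j] by (intro mult_right_mono) auto
    finally show "\<bar>Re (cis (w \<bullet> u) * (\<i> * complex_of_real (w $ j)) * q w)\<bar> \<le> (1 + norm w) * norm (q w)" .
  next
    fix u
    show "integrable lborel (?F u)"
    proof (rule Bochner_Integration.integrable_bound[OF dom])
      show "AE w in lborel. norm (?F u w) \<le> norm ((1 + norm w) * norm (q w))"
      proof (rule AE_I2)
        fix w :: "real^'n"
        have "\<bar>?F u w\<bar> \<le> norm (q w)"
          by (rule order_trans[OF abs_Re_le_cmod]) (simp add: norm_mult)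
        also have "\<dots> \<le> (1 + norm w) * norm (q w)"
          by (simp add: algebra_simps)
        finally show "norm (?F u w) \<le> norm ((1 + norm w) * norm (q w))"
          by simp
      qed
    qed simp
  qed (use dom in simp_all)
  then show "partial j (\<lambda>u. \<integral>w. ?F u w \<partial>lborel) u =
      (\<integral>w. Re (cis (w \<bullet> u) * (\<i> * complex_of_real (w $ j)) * q w) \<partial>lborel)"
    unfolding partial_def by (rule DERIV_imp_deriv)
qed

lemma iter_partial_Re_fourier_integral:
  fixes q :: "real^'n::finite \<Rightarrow> complex"
  assumes [measurable]: "q \<in> borel_measurable borel"
    and dom: "integrable lborel (\<lambda>w. (1 + norm w) ^ k * norm (q w))"
    and "length js \<le> k"
  shows "iter_partial js (\<lambda>u. \<integral>w. Re (cis (w \<bullet> u) * q w) \<partial>lborel) =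
         (\<lambda>u. \<integral>w. Re (cis (w \<bullet> u) * i_omega_list js w * q w) \<partial>lborel)"
  using \<open>length js \<le> k\<close>
proof (induction js)
  case (Cons j js)
  have "integrable lborel (\<lambda>w. (1 + norm w) * norm (i_omega_list js w * q w))"
  proof (rule Bochner_Integration.integrable_bound[OF dom])
    have "(1 + norm w) * norm (i_omega_list js w) \<le> (1 + norm w) ^ k" for w :: "real^'n"
    proof -
      have "(1 + norm w) * norm (i_omega_list js w) \<le> (1 + norm w) * (1 + norm w) ^ length js"
        by (intro mult_left_mono norm_i_omega_list_le) auto
      also have "\<dots> \<le> (1 + norm w) ^ k"
        using Cons.prems power_increasing[of "Suc (length js)" k "1 + norm w"] by simp
      finally show ?thesis .
    qed
    then show "AE w in lborel. norm ((1 + norm w) * norm (i_omega_list js w * q w)) \<le>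
        norm ((1 + norm w) ^ k * norm (q w))"
      by (intro AE_I2) (simp add: norm_mult mult.assoc[symmetric] mult_right_mono)
  qed simp
  then show ?case
    using Cons partial_Re_fourier_integral[of "\<lambda>w. i_omega_list js w * q w" j]
    by (simp add: mult_ac)
qed simp

section \<open>Gaussians\<close>

lemma integral_cis_exp_neg_sq:
  "(\<integral>x. cis (t * x) * complex_of_real (exp (- (x^2) / 2)) \<partial>lborel) =
     complex_of_real (sqrt (2*pi) * exp (- (t^2) / 2))"
proof -
  have "complex_of_real (exp (- (t^2) / 2)) = char std_normal_distribution t"
    by (simp add: char_std_normal_distribution)
  also have "\<dots> = (\<integral>x. complex_of_real (std_normal_density x) * cis (t * x) \<partial>lborel)"
    unfolding char_def
    by (subst integral_density) (auto simp: cis_conv_exp scaleR_conv_of_real mult.commute)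
  also have "\<dots> = (1 / sqrt (2*pi)) * (\<integral>x. cis (t * x) * complex_of_real (exp (- (x^2) / 2)) \<partial>lborel)"
    by (simp add: std_normal_density_def mult_ac)
  finally show ?thesis
    by (simp add: field_simps)
qed

lemma integral_cis_exp_neg_sq_scaled:
  fixes e :: real
  assumes "e > 0"
  shows "(\<integral>x. cis (y * x) * complex_of_real (exp (- ((e*x)^2) / 2)) \<partial>lborel) =
     complex_of_real (sqrt (2*pi) / e * exp (- ((y/e)^2) / 2))"
proof -
  have "(\<integral>x. cis ((y/e) * x) * complex_of_real (exp (- (x^2) / 2)) \<partial>lborel)
      = \<bar>e\<bar> *\<^sub>R (\<integral>x. cis ((y/e) * (0 + e * x)) * complex_of_real (exp (- ((0 + e*x)^2) / 2)) \<partial>lborel)"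
    using assms by (intro lborel_integral_real_affine) auto
  also have "(\<lambda>x. cis ((y/e) * (0 + e * x)) * complex_of_real (exp (- ((0 + e*x)^2) / 2)))
     = (\<lambda>x. cis (y * x) * complex_of_real (exp (- ((e*x)^2) / 2)))"
    using assms by (auto simp: fun_eq_iff)
  finally have "(\<integral>x. cis (y * x) * complex_of_real (exp (- ((e*x)^2) / 2)) \<partial>lborel)
     = (1/e) *\<^sub>R (\<integral>x. cis ((y/e) * x) * complex_of_real (exp (- (x^2) / 2)) \<partial>lborel)"
    using assms by simp
  also have "\<dots> = (1/e) *\<^sub>R complex_of_real (sqrt (2*pi) * exp (- ((y/e)^2) / 2))"
    by (simp only: integral_cis_exp_neg_sq)
  finally show ?thesis
    by (simp add: scaleR_conv_of_real)
qed

lemma integrable_abs_power_exp_neg_sq: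
  fixes e :: real
  assumes "e > 0"
  shows "integrable lborel (\<lambda>x. \<bar>x\<bar>^m * exp (- ((e*x)^2) / 2))"
proof -
  have "integrable lborel (\<lambda>x. std_normal_density (0 + e * x) * \<bar>0 + e * x\<bar>^m)"
    using assms
    by (intro lborel_integrable_real_affine[where f="\<lambda>x. std_normal_density x * \<bar>x\<bar>^m"])
      (auto intro: integrable_std_normal_moment_abs)
  then have "integrable lborel (\<lambda>x. (sqrt (2*pi) / e^m) * (std_normal_density (0 + e * x) * \<bar>0 + e * x\<bar>^m))"
    by (rule integrable_mult_right)
  moreover have "(\<lambda>x. (sqrt (2*pi) / e^m) * (std_normal_density (0 + e * x) * \<bar>0 + e * x\<bar>^m))
     = (\<lambda>x. \<bar>x\<bar>^m * exp (- ((e*x)^2) / 2))"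
    using assms by (auto simp: fun_eq_iff std_normal_density_def abs_mult power_mult_distrib)
  ultimately show ?thesis by simp
qed

lemma integrable_lborel_prod_coords:
  fixes g :: "'a::euclidean_space \<Rightarrow> real \<Rightarrow> 'c::{real_normed_field,banach,second_countable_topology}"
  assumes "\<And>b. b \<in> Basis \<Longrightarrow> integrable lborel (g b)"
  shows "integrable (lborel::'a measure) (\<lambda>x. \<Prod>b\<in>Basis. g b (x \<bullet> b))"
    and "(\<integral>x. (\<Prod>b\<in>Basis. g b (x \<bullet> b)) \<partial>(lborel::'a measure)) = (\<Prod>b\<in>Basis. integral\<^sup>L lborel (g b))"
proof -
  interpret product_sigma_finite "\<lambda>_::'a. lborel::real measure"
    by standard
  have [measurable]: "\<And>b. b \<in> Basis \<Longrightarrow> g b \<in> borel_measurable borel"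
    using borel_measurable_integrable[OF assms] by simp
  have meas: "(\<lambda>x::'a. \<Prod>b\<in>Basis. g b (x \<bullet> b)) \<in> borel_measurable borel"
    by measurable
  have coords: "(\<Prod>b\<in>Basis. g b ((\<Sum>b'\<in>Basis. f b' *\<^sub>R b') \<bullet> b)) = (\<Prod>b\<in>Basis. g b (f b))" for f
    by (intro prod.cong refl) (simp add: inner_sum_left inner_Basis if_distrib sum.delta cong: if_cong)
  have "integrable (\<Pi>\<^sub>M b\<in>Basis. lborel) (\<lambda>f. \<Prod>b\<in>Basis. g b (f b))"
    using assms by (intro product_integrable_prod) auto
  then show "integrable (lborel::'a measure) (\<lambda>x. \<Prod>b\<in>Basis. g b (x \<bullet> b))"
    by (subst lborel_eq) (subst integrable_distr_eq; simp add: meas coords)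
  have "(\<integral>x. (\<Prod>b\<in>Basis. g b (x \<bullet> b)) \<partial>(lborel::'a measure)) =
     (\<integral>f. (\<Prod>b\<in>Basis. g b (f b)) \<partial>(\<Pi>\<^sub>M b\<in>Basis. lborel))"
    by (subst lborel_eq) (subst integral_distr; simp add: meas coords)
  also have "\<dots> = (\<Prod>b\<in>Basis. integral\<^sup>L lborel (g b))"
    using assms by (intro product_integral_prod) auto
  finally show "(\<integral>x. (\<Prod>b\<in>Basis. g b (x \<bullet> b)) \<partial>(lborel::'a measure)) = (\<Prod>b\<in>Basis. integral\<^sup>L lborel (g b))" .
qed

definition gaussian :: "real \<Rightarrow> 'a::euclidean_space \<Rightarrow> real" where
  "gaussian e w = exp (- ((e * norm w)^2) / 2)"

lemma gaussian_pos: "gaussian e w > 0"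
  by (simp add: gaussian_def)

lemma gaussian_nonneg [simp]: "gaussian e w \<ge> 0"
  and abs_gaussian [simp]: "\<bar>gaussian e w\<bar> = gaussian e w"
  using gaussian_pos[of e w] by auto

lemma borel_measurable_gaussian [measurable]: "gaussian e \<in> borel_measurable borel"
  unfolding gaussian_def by measurable

lemma gaussian_eq_prod: "gaussian e w = (\<Prod>b\<in>Basis. exp (- ((e * (w \<bullet> b))^2) / 2))"
proof -
  have "(norm w)^2 = (\<Sum>b\<in>Basis. (w \<bullet> b)^2)"
    unfolding power2_norm_eq_inner by (subst euclidean_inner) (simp add: power2_eq_square)
  then have "(e * norm w)^2 = (\<Sum>b\<in>Basis. (e * (w \<bullet> b))^2)"
    by (simp add: power_mult_distrib sum_distrib_left)
  then show ?thesis
    unfolding gaussian_def by (simp add: exp_sum[symmetric] sum_negf sum_divide_distrib)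
qed

lemma cis_inner_eq_prod: "cis (w \<bullet> y) = (\<Prod>b\<in>Basis. cis ((y \<bullet> b) * (w \<bullet> b)))"
proof -
  have "cis (w \<bullet> y) = exp (\<Sum>b\<in>Basis. \<i> * complex_of_real ((y \<bullet> b) * (w \<bullet> b)))"
    by (simp add: cis_conv_exp euclidean_inner[of w y] mult.commute sum_distrib_left)
  then show ?thesis
    by (simp add: exp_sum cis_conv_exp)
qed

lemma integrable_gaussian:
  assumes "e > 0"
  shows "integrable lborel (gaussian e :: 'a::euclidean_space \<Rightarrow> real)"
proof -
  have "integrable (lborel::'a measure) (\<lambda>w. \<Prod>b\<in>Basis. \<bar>w \<bullet> b\<bar>^0 * exp (- ((e * (w \<bullet> b))^2) / 2))"
    using assms by (intro integrable_lborel_prod_coords(1) integrable_abs_power_exp_neg_sq)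
  then show ?thesis
    by (simp add: gaussian_eq_prod[abs_def])
qed

lemma integral_cis_gaussian:
  assumes "e > 0"
  shows "(\<integral>w. cis (w \<bullet> y) * complex_of_real (gaussian e w) \<partial>(lborel::'a::euclidean_space measure)) =
     complex_of_real ((sqrt (2*pi) / e)^DIM('a) * gaussian (1/e) y)"
proof -
  define g where "g b x = cis ((y \<bullet> b) * x) * complex_of_real (exp (- ((e*x)^2) / 2))" for b :: 'a and x
  have "integrable lborel (\<lambda>x. \<bar>x\<bar>^0 * exp (- ((e*x)^2) / 2))"
    using assms by (rule integrable_abs_power_exp_neg_sq)
  then have g_integrable: "integrable lborel (g b)" for b
    by (rule Bochner_Integration.integrable_bound)
      (auto simp: g_def norm_mult intro!: borel_measurable_continuous_onI continuous_intros)
  have "(\<integral>w. cis (w \<bullet> y) * complex_of_real (gaussian e w) \<partial>(lborel::'a measure)) =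
      (\<integral>w. (\<Prod>b\<in>Basis. g b (w \<bullet> b)) \<partial>lborel)"
    by (simp add: g_def prod.distrib gaussian_eq_prod cis_inner_eq_prod)
  also have "\<dots> = (\<Prod>b\<in>Basis. integral\<^sup>L lborel (g b))"
    using g_integrable by (rule integrable_lborel_prod_coords(2))
  also have "\<dots> = (\<Prod>b\<in>(Basis::'a set). complex_of_real (sqrt (2*pi) / e * exp (- (((y \<bullet> b) / e)^2) / 2)))"
    unfolding g_def using assms by (intro prod.cong refl integral_cis_exp_neg_sq_scaled)
  also have "\<dots> = complex_of_real (\<Prod>b\<in>Basis. sqrt (2*pi) / e * exp (- (((y \<bullet> b) / e)^2) / 2))"
    by simp
  also have "(\<Prod>b\<in>(Basis::'a set). sqrt (2*pi) / e * exp (- (((y \<bullet> b) / e)^2) / 2)) =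
      (sqrt (2*pi) / e)^DIM('a) * gaussian (1/e) y"
    unfolding prod.distrib gaussian_eq_prod by (simp add: power_divide)
  finally show ?thesis .
qed

lemma integral_gaussian_pos:
  assumes "e > 0"
  shows "(\<integral>w. gaussian e w \<partial>(lborel :: 'a::euclidean_space measure)) > 0"
proof -
  have "complex_of_real (\<integral>w. gaussian e w \<partial>(lborel :: 'a measure)) =
      complex_of_real ((sqrt (2*pi) / e)^DIM('a) * gaussian (1/e) (0::'a))"
    using integral_cis_gaussian[OF assms, of 0] by simp
  then have "(\<integral>w. gaussian e w \<partial>(lborel :: 'a measure)) = (sqrt (2*pi) / e)^DIM('a) * gaussian (1/e) (0::'a)"
    by (simp only: of_real_eq_iff)
  then show ?thesis
    using assms gaussian_pos[of "1/e" "0::'a"] by simp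
qed

lemma one_plus_sum_le_prod:
  assumes "finite B" "\<And>b. b \<in> B \<Longrightarrow> (a b :: real) \<ge> 0"
  shows "1 + (\<Sum>b\<in>B. a b) \<le> (\<Prod>b\<in>B. 1 + a b)"
  using assms
proof (induction B rule: finite_induct)
  case (insert x F)
  have "1 \<le> (\<Prod>b\<in>F. 1 + a b)"
    using insert by (intro prod_ge_1) auto
  then have "a x \<le> a x * (\<Prod>b\<in>F. 1 + a b)"
    using insert(4)[of x] by (simp add: mult_le_cancel_left1)
  then show ?case
    using insert by (simp add: algebra_simps)
qed simp

lemma one_plus_power_le: "(a::real) \<ge> 0 \<Longrightarrow> (1 + a)^k \<le> 2^k * (1 + a^k)"
proof -
  assume a: "a \<ge> 0"
  have "(1 + a)^k \<le> (2 * max 1 a)^k"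
    using a by (intro power_mono) auto
  also have "\<dots> = 2^k * (max 1 a)^k"
    by (simp add: power_mult_distrib)
  also have "(max 1 a)^k \<le> 1 + a^k"
    using a by (cases "a \<le> 1") (auto simp: max_def)
  finally show ?thesis by simp
qed

text \<open>Dominate \<open>(1 + \<bar>w\<bar>)^k\<close> by a product over the coordinates, so that the weighted Gaussian
  factorises into integrable one-dimensional moments.\<close>
lemma integrable_power_gaussian:
  assumes "e > 0"
  shows "integrable (lborel::'a::euclidean_space measure) (\<lambda>w. (1 + norm w)^k * gaussian e w)"
proof (rule Bochner_Integration.integrable_bound)
  let ?g = "\<lambda>w::'a. \<Prod>b\<in>Basis. 2^k * (\<bar>w \<bullet> b\<bar>^0 * exp (- ((e * (w \<bullet> b))^2) / 2)
        + \<bar>w \<bullet> b\<bar>^k * exp (- ((e * (w \<bullet> b))^2) / 2))"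
  show "integrable lborel ?g"
    using assms by (intro integrable_lborel_prod_coords(1) integrable_mult_right
        Bochner_Integration.integrable_add integrable_abs_power_exp_neg_sq)
  have poly_bound: "(1 + norm w)^k \<le> (\<Prod>b\<in>Basis. 2^k * (1 + \<bar>w \<bullet> b\<bar>^k))" for w :: 'a
  proof -
    have "(1 + norm w)^k \<le> (1 + (\<Sum>b\<in>Basis. \<bar>w \<bullet> b\<bar>))^k"
      by (intro power_mono) (auto simp: norm_le_l1)
    also have "\<dots> \<le> (\<Prod>b\<in>Basis. 1 + \<bar>w \<bullet> b\<bar>)^k"
      by (intro power_mono one_plus_sum_le_prod) (auto intro: sum_nonneg)
    also have "\<dots> = (\<Prod>b\<in>Basis. (1 + \<bar>w \<bullet> b\<bar>)^k)"
      by (simp add: prod_power_distrib)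
    also have "\<dots> \<le> (\<Prod>b\<in>Basis. 2^k * (1 + \<bar>w \<bullet> b\<bar>^k))"
      by (intro prod_mono conjI one_plus_power_le) auto
    finally show ?thesis .
  qed
  have bound: "(1 + norm w)^k * gaussian e w \<le> ?g w" for w :: 'a
  proof -
    have "(1 + norm w)^k * gaussian e w \<le> (\<Prod>b\<in>Basis. 2^k * (1 + \<bar>w \<bullet> b\<bar>^k)) * gaussian e w"
      using poly_bound[of w] gaussian_pos[of e w] by (intro mult_right_mono) auto
    also have "\<dots> = ?g w"
      by (simp add: gaussian_eq_prod prod.distrib[symmetric] algebra_simps)
    finally show ?thesis .
  qed
  show "AE w in lborel. norm ((1 + norm w)^k * gaussian e w) \<le> norm (?g w)"
  proof (rule AE_I2)
    fix w :: 'a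
    have "norm ((1 + norm w)^k * gaussian e w) = (1 + norm w)^k * gaussian e w"
      using gaussian_pos[of e w] by (simp add: abs_mult)
    also have "\<dots> \<le> norm (?g w)"
      using bound[of w] by simp
    finally show "norm ((1 + norm w)^k * gaussian e w) \<le> norm (?g w)" .
  qed
qed simp

section \<open>The Gaussian kernel\<close>

lemma integrable_gaussian_kernel:
  assumes "e > 0"
  shows "integrable lborel (\<lambda>x::'a::euclidean_space. gaussian (1/e) (x - a))"
  using integrable_lborel_reflect[OF integrable_gaussian[of "1/e"], of a] assms
  by (simp add: gaussian_def norm_minus_commute)

lemma integral_gaussian_kernel_rescale:
  fixes h :: "'a::euclidean_space \<Rightarrow> real"
  assumes e: "e > 0" and [measurable]: "h \<in> borel_measurable borel"
  shows "(\<integral>x. h x * gaussian (1/e) (x - a) \<partial>lborel) =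
         e^DIM('a) * (\<integral>z. h (a + e *\<^sub>R z) * gaussian 1 z \<partial>lborel)"
proof -
  have lborel_rescaled: "lborel = density (distr lborel borel (\<lambda>z. a + e *\<^sub>R z)) (\<lambda>_. \<bar>e\<bar>^DIM('a))"
    using e by (intro lborel_affine) simp
  have "(\<integral>x. h x * gaussian (1/e) (x - a) \<partial>lborel) =
      (\<integral>x. h x * gaussian (1/e) (x - a) \<partial>density (distr lborel borel (\<lambda>z. a + e *\<^sub>R z)) (\<lambda>_. \<bar>e\<bar>^DIM('a)))"
    by (subst lborel_rescaled) (rule refl)
  also have "\<dots> = (\<integral>x. \<bar>e\<bar>^DIM('a) * (h x * gaussian (1/e) (x - a)) \<partial>distr lborel borel (\<lambda>z. a + e *\<^sub>R z))"
    by (subst integral_density) (auto simp: ennreal_power)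
  also have "\<dots> = (\<integral>z. \<bar>e\<bar>^DIM('a) * (h (a + e *\<^sub>R z) * gaussian (1/e) (e *\<^sub>R z)) \<partial>lborel)"
    by (subst integral_distr) auto
  also have "\<dots> = e^DIM('a) * (\<integral>z. h (a + e *\<^sub>R z) * gaussian 1 z \<partial>lborel)"
    using e by (simp add: gaussian_def)
  finally show ?thesis .
qed

text \<open>The Gaussian kernels form an approximate identity: by the rescaling above the kernel
  integrals are multiples of \<open>\<integral> h (a + e z) \<cdot> gaussian 1 z dz\<close>, which tends to
  \<open>h a \<cdot> \<integral> gaussian 1\<close> as \<open>e \<rightarrow> 0\<close>.\<close>
lemma eq_0_if_gaussian_kernel_integrals_eq_0:
  fixes h :: "'a::euclidean_space \<Rightarrow> real"
  assumes h: "continuous_on UNIV h" "bounded (range h)"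
    and kernel_integrals: "\<And>e. e > 0 \<Longrightarrow> (\<integral>x. h x * gaussian (1/e) (x - a) \<partial>lborel) = 0"
  shows "h a = 0"
proof -
  have [measurable]: "h \<in> borel_measurable borel"
    by (rule borel_measurable_continuous_onI[OF h(1)])
  obtain B where B: "\<And>x. \<bar>h x\<bar> \<le> B"
    using h(2) by (auto simp: bounded_real)
  have rescaled: "(\<integral>z. h (a + e *\<^sub>R z) * gaussian 1 z \<partial>lborel) = 0" if e: "e > 0" for e
    using kernel_integrals[OF e] integral_gaussian_kernel_rescale[OF e, of h a] e by simp
  have "(\<lambda>n. \<integral>z. h (a + (1 / Suc n) *\<^sub>R z) * gaussian 1 z \<partial>lborel) \<longlonglongrightarrow>
      (\<integral>z. h a * gaussian 1 (z::'a) \<partial>lborel)"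
  proof (rule integral_dominated_convergence[where w="\<lambda>z::'a. B * gaussian 1 z"])
    show "integrable lborel (\<lambda>z. B * gaussian 1 (z::'a))"
      using integrable_gaussian[of 1, where 'a='a] by simp
    have "(\<lambda>n. 1 / real (Suc n)) \<longlonglongrightarrow> 0"
      by (rule LIMSEQ_Suc[OF lim_const_over_n])
    then have "(\<lambda>n. a + (1 / Suc n) *\<^sub>R z) \<longlonglongrightarrow> a + 0 *\<^sub>R z" for z
      by (intro tendsto_intros)
    then show "AE z in lborel. (\<lambda>n. h (a + (1 / Suc n) *\<^sub>R z) * gaussian 1 z) \<longlonglongrightarrow> h a * gaussian 1 z"
      using h(1) by (intro AE_I2 tendsto_intros isCont_tendsto_compose[where g=h])
        (auto simp: continuous_on_eq_continuous_at)
    show "AE z in lborel. norm (h (a + (1 / Suc n) *\<^sub>R z) * gaussian 1 z) \<le> B * gaussian 1 z" for n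
    proof (rule AE_I2)
      fix z :: 'a
      show "norm (h (a + (1 / Suc n) *\<^sub>R z) * gaussian 1 z) \<le> B * gaussian 1 z"
        using B gaussian_pos[of 1 z] by (simp add: abs_mult mult_right_mono)
    qed
  qed auto
  then have "(\<lambda>n. 0) \<longlonglongrightarrow> h a * (\<integral>z. gaussian 1 z \<partial>(lborel :: 'a measure))"
    using rescaled by simp
  then have "h a * (\<integral>z. gaussian 1 z \<partial>(lborel :: 'a measure)) = 0"
    using LIMSEQ_unique tendsto_const by blast
  then show ?thesis
    using integral_gaussian_pos[of 1, where 'a='a] by simp
qed

definition kernel_spectrum :: "real \<Rightarrow> 'a::euclidean_space \<Rightarrow> 'a \<Rightarrow> complex" where
  "kernel_spectrum e a w = complex_of_real ((e / sqrt (2*pi))^DIM('a) * gaussian e w) * cis (- (w \<bullet> a))"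

lemma borel_measurable_kernel_spectrum [measurable]: "kernel_spectrum e a \<in> borel_measurable borel"
  unfolding kernel_spectrum_def[abs_def] by measurable

lemma norm_kernel_spectrum:
  fixes a w :: "'a::euclidean_space"
  assumes "e > 0"
  shows "norm (kernel_spectrum e a w) = (e / sqrt (2*pi))^DIM('a) * gaussian e w"
  unfolding kernel_spectrum_def norm_mult norm_of_real norm_cis
  using assms gaussian_pos[of e w] by (simp add: abs_mult)

lemma gaussian_kernel_eq_integral_spectrum:
  fixes x a :: "'a::euclidean_space"
  assumes "e > 0"
  shows "complex_of_real (gaussian (1/e) (x - a)) = (\<integral>w. cis (w \<bullet> x) * kernel_spectrum e a w \<partial>lborel)"
proof -
  have "cis (w \<bullet> x) * kernel_spectrum e a w =
      complex_of_real ((e / sqrt (2*pi))^DIM('a)) * (cis (w \<bullet> (x - a)) * complex_of_real (gaussian e w))" for w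
  proof -
    have "cis (w \<bullet> x) * cis (- (w \<bullet> a)) = cis (w \<bullet> (x - a))"
      by (subst cis_mult) (simp add: inner_diff_right)
    then show ?thesis
      by (simp add: kernel_spectrum_def mult_ac)
  qed
  then have "(\<integral>w. cis (w \<bullet> x) * kernel_spectrum e a w \<partial>lborel) =
      complex_of_real ((e / sqrt (2*pi))^DIM('a) * ((sqrt (2*pi) / e)^DIM('a) * gaussian (1/e) (x - a)))"
    using integral_cis_gaussian[OF assms, of "x - a"] by simp
  also have "\<dots> = complex_of_real (gaussian (1/e) (x - a))"
    using assms by (simp flip: power_mult_distrib)
  finally show ?thesis ..
qed

lemma integral_gaussian_kernel_eq_fourier:
  fixes h :: "real^'n::finite \<Rightarrow> real"
  assumes e: "e > 0" and h: "integrable lborel h"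
  shows "complex_of_real (\<integral>x. h x * gaussian (1/e) (x - a) \<partial>lborel) =
         (\<integral>w. kernel_spectrum e a w * fourier (\<lambda>x. complex_of_real (h x)) w \<partial>lborel)"
proof -
  have [measurable]: "h \<in> borel_measurable borel"
    using h by (simp add: borel_measurable_integrable)
  define F where "F x w = complex_of_real (h x) * (cis (w \<bullet> x) * kernel_spectrum e a w)" for x w :: "real^'n"
  have "complex_of_real (\<integral>x. h x * gaussian (1/e) (x - a) \<partial>lborel) =
      (\<integral>x. complex_of_real (h x) * complex_of_real (gaussian (1/e) (x - a)) \<partial>lborel)"
    by (simp only: of_real_mult[symmetric] integral_complex_of_real)
  also have "\<dots> = (\<integral>x. (\<integral>w. F x w \<partial>lborel) \<partial>lborel)"
    by (simp add: F_def gaussian_kernel_eq_integral_spectrum[OF e])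
  also have "\<dots> = (\<integral>w. (\<integral>x. F x w \<partial>lborel) \<partial>lborel)"
  proof (rule Fubini_product_bound(1))
    show "(\<lambda>p. F (fst p) (snd p)) \<in> borel_measurable (lborel \<Otimes>\<^sub>M lborel)"
      unfolding F_def by measurable
    show "norm (F x w) \<le> \<bar>h x\<bar> * ((e / sqrt (2*pi))^CARD('n) * gaussian e w)" for x w
      using e by (simp add: F_def norm_mult norm_kernel_spectrum)
    show "integrable lborel (\<lambda>w. (e / sqrt (2*pi))^CARD('n) * gaussian e (w::real^'n))"
      using integrable_gaussian[OF e, where 'a="real^'n"] by simp
  qed (use h in \<open>auto intro: lborel.sigma_finite_measure_axioms\<close>)
  also have "\<dots> = (\<integral>w. kernel_spectrum e a w * fourier (\<lambda>x. complex_of_real (h x)) w \<partial>lborel)"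
  proof (intro Bochner_Integration.integral_cong refl)
    fix w
    have "F x w = kernel_spectrum e a w * (cis (w \<bullet> x) * complex_of_real (h x))" for x
      by (simp add: F_def mult_ac)
    then show "(\<integral>x. F x w \<partial>lborel) = kernel_spectrum e a w * fourier (\<lambda>x. complex_of_real (h x)) w"
      by (simp add: fourier_def)
  qed
  finally show ?thesis .
qed

definition kernel_measure :: "real \<Rightarrow> 'a::euclidean_space \<Rightarrow> 'a measure" where
  "kernel_measure e a = density lborel (\<lambda>x. ennreal (gaussian (1/e) (x - a)))"

lemma sets_kernel_measure [simp]: "sets (kernel_measure e a) = sets borel"
  by (simp add: kernel_measure_def)

lemma finite_measure_kernel_measure:
  assumes "e > 0"
  shows "finite_measure (kernel_measure e a)"
proof (rule finite_measureI)
  have "(\<integral>\<^sup>+x. ennreal (gaussian (1/e) (x - a)) \<partial>lborel) < \<infinity>"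
    using integrable_gaussian_kernel[OF assms, of a] by (simp add: integrable_iff_bounded)
  then show "emeasure (kernel_measure e a) (space (kernel_measure e a)) \<noteq> \<infinity>"
    by (simp add: kernel_measure_def emeasure_density)
qed

lemma fin_signed_kernel_measure: "e > 0 \<Longrightarrow> fin_signed (kernel_measure e a) (null_measure borel)"
  by (simp add: fin_signed_null_measure finite_measure_kernel_measure)

lemma integral_kernel_measure:
  assumes "f \<in> borel_measurable borel"
  shows "(\<integral>x. f x \<partial>kernel_measure e a) = (\<integral>x. f x * gaussian (1/e) (x - a) \<partial>lborel)"
  unfolding kernel_measure_def using assms by (subst integral_density) (auto simp: mult.commute)

lemma integrable_kernel_measure_iff:
  assumes "f \<in> borel_measurable borel"
  shows "integrable (kernel_measure e a) f \<longleftrightarrow> integrable lborel (\<lambda>x. f x * gaussian (1/e) (x - a))"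
  unfolding kernel_measure_def using assms by (subst integrable_density) (auto simp: mult.commute)

lemma conv_signed_kernel_measure:
  assumes "h \<in> borel_measurable borel"
  shows "conv_signed h (kernel_measure e a) (null_measure borel) u =
         (\<integral>x. h (u - x) * gaussian (1/e) (x - a) \<partial>lborel)"
  using assms by (simp add: conv_signed_def sint_def integral_kernel_measure)

section \<open>The deconvolution identity\<close>

text \<open>Here \<open>L\<close> plays the role of \<open>lam g fV y\<close>, and \<open>fourier_L\<close> is the hypothesis on \<open>Qfun\<close>
  with its denominator, the characteristic function of \<open>V\<close> at \<open>-\<omega>\<close>, i.e. the Fourier transform
  of \<open>fV\<close> at \<open>-\<omega>\<close>, cleared.\<close>
locale fourier_deconvolution =
  fixes fV L :: "real^'n::finite \<Rightarrow> real" and k :: nat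
    and Mp Mn :: "'n multi_index \<Rightarrow> (real^'n) measure"
  assumes fV_integrable: "integrable lborel fV"
    and fV_Cbk: "Cbk k fV"
    and L_continuous: "continuous_on UNIV L"
    and L_bounded: "bounded (range L)"
    and L_integrable: "integrable lborel L"
    and signed_measures: "\<And>\<alpha>. \<alpha> \<in> multi_indices k \<Longrightarrow> fin_signed (Mp \<alpha>) (Mn \<alpha>)"
    and fourier_L: "AE w in lborel. fourier (\<lambda>x. complex_of_real (L x)) w =
        fourier (\<lambda>x. complex_of_real (fV x)) (- w) *
        (\<Sum>\<alpha>\<in>multi_indices k. i_omega_pow \<alpha> w * schar (Mp \<alpha>) (Mn \<alpha>) w)"
begin

lemma finite_measures:
  assumes "\<alpha> \<in> multi_indices k"
  shows "finite_measure (Mp \<alpha>)" "sets (Mp \<alpha>) = sets borel"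
    and "finite_measure (Mn \<alpha>)" "sets (Mn \<alpha>) = sets borel"
  using signed_measures[OF assms] by (auto simp: fin_signed_def)

lemma mderiv_fV_continuous: "\<alpha> \<in> multi_indices k \<Longrightarrow> continuous_on UNIV (mderiv \<alpha> fV)"
  and mderiv_fV_bounded: "\<alpha> \<in> multi_indices k \<Longrightarrow> bounded (range (mderiv \<alpha> fV))"
  using Cbk_continuous[OF fV_Cbk] Cbk_bounded[OF fV_Cbk] length_mi_list_le
  by (auto simp: mderiv_eq_iter_partial)

lemma borel_measurable_fV [measurable]: "fV \<in> borel_measurable borel"
  using Cbk_continuous[OF fV_Cbk, of "[]"] by (simp add: borel_measurable_continuous_onI)

lemma borel_measurable_mderiv_fV: "\<alpha> \<in> multi_indices k \<Longrightarrow> mderiv \<alpha> fV \<in> borel_measurable borel"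
  using mderiv_fV_continuous by (rule borel_measurable_continuous_onI)

definition smoothed_spectrum :: "real \<Rightarrow> real^'n \<Rightarrow> real^'n \<Rightarrow> complex" where
  "smoothed_spectrum e a w = kernel_spectrum e a w * fourier (\<lambda>x. complex_of_real (fV x)) (- w)"

lemma borel_measurable_smoothed_spectrum [measurable]:
  "smoothed_spectrum e a \<in> borel_measurable borel"
  unfolding smoothed_spectrum_def[abs_def] by measurable

lemma integrable_weighted_smoothed_spectrum:
  assumes "e > 0"
  shows "integrable lborel (\<lambda>w. (1 + norm w)^k * norm (smoothed_spectrum e a w))"
proof (rule Bochner_Integration.integrable_bound)
  let ?c = "(e / sqrt (2*pi))^DIM(real^'n) * (\<integral>x. norm (complex_of_real (fV x)) \<partial>lborel)"
  show "integrable lborel (\<lambda>w. ?c * ((1 + norm w)^k * gaussian e w))"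
    by (intro integrable_mult_right integrable_power_gaussian[OF assms])
  show "AE w in lborel. norm ((1 + norm w)^k * norm (smoothed_spectrum e a w)) \<le>
      norm (?c * ((1 + norm w)^k * gaussian e w))"
  proof (rule AE_I2)
    fix w :: "real^'n"
    have "norm (smoothed_spectrum e a w) \<le> (e / sqrt (2*pi))^DIM(real^'n) * gaussian e w *
        (\<integral>x. norm (complex_of_real (fV x)) \<partial>lborel)"
      unfolding smoothed_spectrum_def norm_mult norm_kernel_spectrum[OF assms]
      using assms by (intro mult_left_mono norm_fourier_le) auto
    then have "(1 + norm w)^k * norm (smoothed_spectrum e a w) \<le>
        (1 + norm w)^k * ((e / sqrt (2*pi))^DIM(real^'n) * gaussian e w *
        (\<integral>x. norm (complex_of_real (fV x)) \<partial>lborel))"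
      by (rule mult_left_mono) simp
    also have "\<dots> = ?c * ((1 + norm w)^k * gaussian e w)"
      by (simp only: ac_simps)
    finally have "(1 + norm w)^k * norm (smoothed_spectrum e a w) \<le> ?c * ((1 + norm w)^k * gaussian e w)" .
    then show "norm ((1 + norm w)^k * norm (smoothed_spectrum e a w)) \<le>
        norm (?c * ((1 + norm w)^k * gaussian e w))"
      by simp
  qed
qed simp

lemma integrable_smoothed_spectrum_mult:
  assumes "e > 0" and [measurable]: "c \<in> borel_measurable borel"
    and c: "\<And>w. norm (c w) \<le> C * (1 + norm w)^k"
  shows "integrable lborel (\<lambda>w. c w * smoothed_spectrum e a w)"
proof (rule Bochner_Integration.integrable_bound)
  show "integrable lborel (\<lambda>w. C * ((1 + norm w)^k * norm (smoothed_spectrum e a w)))"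
    using integrable_weighted_smoothed_spectrum[OF assms(1)] by simp
  show "AE w in lborel. norm (c w * smoothed_spectrum e a w) \<le>
      norm (C * ((1 + norm w)^k * norm (smoothed_spectrum e a w)))"
    using c by (intro AE_I2) (auto simp: norm_mult mult.assoc[symmetric]
        intro!: mult_right_mono order_trans[OF _ abs_ge_self])
qed simp

lemma fV_conv_kernel:
  assumes "e > 0"
  shows "(\<integral>x. fV (u - x) * gaussian (1/e) (x - a) \<partial>lborel) =
         (\<integral>w. Re (cis (w \<bullet> u) * smoothed_spectrum e a w) \<partial>lborel)"
proof -
  have "complex_of_real (\<integral>x. fV (u - x) * gaussian (1/e) (x - a) \<partial>lborel) =
      (\<integral>w. kernel_spectrum e a w * fourier (\<lambda>x. complex_of_real (fV (u - x))) w \<partial>lborel)"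
    using integral_gaussian_kernel_eq_fourier[OF assms integrable_lborel_reflect[OF fV_integrable]] .
  also have "\<dots> = (\<integral>w. cis (w \<bullet> u) * smoothed_spectrum e a w \<partial>lborel)"
    using fourier_reflect[of "\<lambda>x. complex_of_real (fV x)" u] by (simp add: smoothed_spectrum_def mult_ac)
  also have "Re \<dots> = (\<integral>w. Re (cis (w \<bullet> u) * smoothed_spectrum e a w) \<partial>lborel)"
    using assms by (intro integral_Re[symmetric] integrable_smoothed_spectrum_mult[where C=1]) auto
  finally show ?thesis
    by (metis Re_complex_of_real)
qed

lemma mderiv_fV_conv_kernel:
  assumes e: "e > 0" and \<alpha>: "\<alpha> \<in> multi_indices k"
  shows "(\<integral>x. mderiv \<alpha> fV (u - x) * gaussian (1/e) (x - a) \<partial>lborel) =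
         Re (\<integral>w. cis (w \<bullet> u) * (i_omega_pow \<alpha> w * smoothed_spectrum e a w) \<partial>lborel)"
proof -
  let ?K = "kernel_measure e a" and ?Z = "null_measure (borel :: (real^'n) measure)"
  have len: "length (mi_list \<alpha>) \<le> k"
    using \<alpha> by (rule length_mi_list_le)
  have "conv_signed fV ?K ?Z = (\<lambda>u. \<integral>w. Re (cis (w \<bullet> u) * smoothed_spectrum e a w) \<partial>lborel)"
    by (simp add: conv_signed_kernel_measure fV_conv_kernel[OF e] fun_eq_iff)
  then have "mderiv \<alpha> (conv_signed fV ?K ?Z) =
      (\<lambda>u. \<integral>w. Re (cis (w \<bullet> u) * i_omega_pow \<alpha> w * smoothed_spectrum e a w) \<partial>lborel)"
    using iter_partial_Re_fourier_integral[OF _ integrable_weighted_smoothed_spectrum[OF e] len]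
    by (simp add: mderiv_eq_iter_partial i_omega_pow_eq_i_omega_list)
  moreover have "mderiv \<alpha> (conv_signed fV ?K ?Z) = conv_signed (mderiv \<alpha> fV) ?K ?Z"
    using iter_partial_conv_signed[OF fin_signed_kernel_measure[OF e] fV_Cbk len]
    by (simp add: mderiv_eq_iter_partial)
  ultimately have conv: "conv_signed (mderiv \<alpha> fV) ?K ?Z u =
      (\<integral>w. Re (cis (w \<bullet> u) * i_omega_pow \<alpha> w * smoothed_spectrum e a w) \<partial>lborel)"
    by simp
  have "integrable lborel (\<lambda>w. cis (w \<bullet> u) * i_omega_pow \<alpha> w * smoothed_spectrum e a w)"
    using norm_i_omega_pow_le[OF \<alpha>]
    by (intro integrable_smoothed_spectrum_mult[OF e, where C=1]) (auto simp: norm_mult)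
  then have "(\<integral>x. mderiv \<alpha> fV (u - x) * gaussian (1/e) (x - a) \<partial>lborel) =
      Re (\<integral>w. cis (w \<bullet> u) * i_omega_pow \<alpha> w * smoothed_spectrum e a w \<partial>lborel)"
    unfolding conv_signed_kernel_measure[OF borel_measurable_mderiv_fV[OF \<alpha>], symmetric] conv
    by (rule integral_Re)
  then show ?thesis
    by (simp only: mult.assoc)
qed

lemma integrable_smoothed_spectrum_char:
  assumes e: "e > 0" and \<alpha>: "\<alpha> \<in> multi_indices k" and N: "finite_measure N" "sets N = sets borel"
  shows "integrable lborel (\<lambda>w. i_omega_pow \<alpha> w * smoothed_spectrum e a w * (\<integral>u. cis (w \<bullet> u) \<partial>N))"
proof -
  have "norm (i_omega_pow \<alpha> w) * norm (\<integral>u. cis (w \<bullet> u) \<partial>N) \<le> (1 + norm w)^k * measure N (space N)" for w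
    by (intro mult_mono norm_i_omega_pow_le[OF \<alpha>] norm_char_integral_le[OF N(1)]) auto
  then have "norm (i_omega_pow \<alpha> w * (\<integral>u. cis (w \<bullet> u) \<partial>N)) \<le> measure N (space N) * (1 + norm w)^k" for w
    by (simp add: norm_mult mult.commute)
  then have "integrable lborel (\<lambda>w. (i_omega_pow \<alpha> w * (\<integral>u. cis (w \<bullet> u) \<partial>N)) * smoothed_spectrum e a w)"
    using borel_measurable_char_integral[OF N] by (intro integrable_smoothed_spectrum_mult[OF e]) auto
  then show ?thesis
    by (simp add: mult_ac)
qed

lemma mderiv_fV_corr_kernel:
  assumes e: "e > 0" and \<alpha>: "\<alpha> \<in> multi_indices k" and N: "finite_measure N" "sets N = sets borel"
  shows "(\<integral>x. (\<integral>u. mderiv \<alpha> fV (u - x) \<partial>N) * gaussian (1/e) (x - a) \<partial>lborel) =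
           Re (\<integral>w. i_omega_pow \<alpha> w * smoothed_spectrum e a w * (\<integral>u. cis (w \<bullet> u) \<partial>N) \<partial>lborel)"
    and "integrable lborel (\<lambda>x. (\<integral>u. mderiv \<alpha> fV (u - x) \<partial>N) * gaussian (1/e) (x - a))"
proof -
  interpret finite_measure N by fact
  note \<phi> = mderiv_fV_continuous[OF \<alpha>] mderiv_fV_bounded[OF \<alpha>]
  note Fubini = Fubini_translate[OF N finite_measure_kernel_measure[OF e] sets_kernel_measure \<phi>]
  have [measurable]: "(\<lambda>x. \<integral>u. mderiv \<alpha> fV (u - x) \<partial>N) \<in> borel_measurable borel"
    by (rule borel_measurable_continuous_onI[OF continuous_on_integral_translate[OF N \<phi>]])
  show "integrable lborel (\<lambda>x. (\<integral>u. mderiv \<alpha> fV (u - x) \<partial>N) * gaussian (1/e) (x - a))"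
    using Fubini(3) by (simp add: integrable_kernel_measure_iff)
  define P where "P w = i_omega_pow \<alpha> w * smoothed_spectrum e a w" for w
  have [measurable]: "P \<in> borel_measurable borel"
    unfolding P_def[abs_def] by measurable
  have P_integrable: "integrable lborel (\<lambda>w. norm (P w))"
    unfolding P_def using e norm_i_omega_pow_le[OF \<alpha>]
    by (intro integrable_norm integrable_smoothed_spectrum_mult[where C=1]) auto
  have "(\<integral>x. (\<integral>u. mderiv \<alpha> fV (u - x) \<partial>N) * gaussian (1/e) (x - a) \<partial>lborel) =
      (\<integral>u. (\<integral>x. mderiv \<alpha> fV (u - x) * gaussian (1/e) (x - a) \<partial>lborel) \<partial>N)"
    using Fubini(1) borel_measurable_mderiv_fV[OF \<alpha>] by (simp add: integral_kernel_measure)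
  also have "\<dots> = (\<integral>u. Re (\<integral>w. cis (w \<bullet> u) * P w \<partial>lborel) \<partial>N)"
    by (simp add: mderiv_fV_conv_kernel[OF e \<alpha>] P_def)
  also have "\<dots> = Re (\<integral>u. (\<integral>w. cis (w \<bullet> u) * P w \<partial>lborel) \<partial>N)"
    using P_integrable by (intro integral_Re Fubini_cis_integral(2)[OF N]) auto
  also have "\<dots> = Re (\<integral>w. P w * (\<integral>u. cis (w \<bullet> u) \<partial>N) \<partial>lborel)"
    using P_integrable by (subst Fubini_cis_integral(1)[OF N]) auto
  finally show "(\<integral>x. (\<integral>u. mderiv \<alpha> fV (u - x) \<partial>N) * gaussian (1/e) (x - a) \<partial>lborel) =
      Re (\<integral>w. i_omega_pow \<alpha> w * smoothed_spectrum e a w * (\<integral>u. cis (w \<bullet> u) \<partial>N) \<partial>lborel)"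
    by (simp add: P_def)
qed

definition corr :: "'n multi_index \<Rightarrow> real^'n \<Rightarrow> real" where
  "corr \<alpha> x = sint (Mp \<alpha>) (Mn \<alpha>) (\<lambda>u. mderiv \<alpha> fV (u - x))"

lemma corr_continuous: "\<alpha> \<in> multi_indices k \<Longrightarrow> continuous_on UNIV (corr \<alpha>)"
  unfolding corr_def[abs_def] sint_def
  by (intro continuous_on_diff continuous_on_integral_translate finite_measures
      mderiv_fV_continuous mderiv_fV_bounded)

lemma corr_bounded: "\<alpha> \<in> multi_indices k \<Longrightarrow> bounded (range (corr \<alpha>))"
  unfolding corr_def[abs_def] sint_def
  by (intro bounded_minus_comp bounded_integral_translate finite_measures
      mderiv_fV_continuous mderiv_fV_bounded)

lemma integral_corr_kernel:
  assumes e: "e > 0" and \<alpha>: "\<alpha> \<in> multi_indices k"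
  shows "(\<integral>x. corr \<alpha> x * gaussian (1/e) (x - a) \<partial>lborel) =
           Re (\<integral>w. i_omega_pow \<alpha> w * smoothed_spectrum e a w * schar (Mp \<alpha>) (Mn \<alpha>) w \<partial>lborel)"
    and "integrable lborel (\<lambda>x. corr \<alpha> x * gaussian (1/e) (x - a))"
    and "integrable lborel (\<lambda>w. i_omega_pow \<alpha> w * smoothed_spectrum e a w * schar (Mp \<alpha>) (Mn \<alpha>) w)"
proof -
  note p = mderiv_fV_corr_kernel[OF e \<alpha> finite_measures(1,2)[OF \<alpha>], of a]
    integrable_smoothed_spectrum_char[OF e \<alpha> finite_measures(1,2)[OF \<alpha>], of a]
  note n = mderiv_fV_corr_kernel[OF e \<alpha> finite_measures(3,4)[OF \<alpha>], of a]
    integrable_smoothed_spectrum_char[OF e \<alpha> finite_measures(3,4)[OF \<alpha>], of a]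
  have corr_kernel: "corr \<alpha> x * gaussian (1/e) (x - a) =
      (\<integral>u. mderiv \<alpha> fV (u - x) \<partial>Mp \<alpha>) * gaussian (1/e) (x - a) -
      (\<integral>u. mderiv \<alpha> fV (u - x) \<partial>Mn \<alpha>) * gaussian (1/e) (x - a)" for x
    by (simp add: corr_def sint_def left_diff_distrib)
  have spectrum: "i_omega_pow \<alpha> w * smoothed_spectrum e a w * schar (Mp \<alpha>) (Mn \<alpha>) w =
      i_omega_pow \<alpha> w * smoothed_spectrum e a w * (\<integral>u. cis (w \<bullet> u) \<partial>Mp \<alpha>) -
      i_omega_pow \<alpha> w * smoothed_spectrum e a w * (\<integral>u. cis (w \<bullet> u) \<partial>Mn \<alpha>)" for w
    by (simp add: schar_def right_diff_distrib)
  show "integrable lborel (\<lambda>x. corr \<alpha> x * gaussian (1/e) (x - a))"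
    unfolding corr_kernel using p(2) n(2) by (rule Bochner_Integration.integrable_diff)
  show "integrable lborel (\<lambda>w. i_omega_pow \<alpha> w * smoothed_spectrum e a w * schar (Mp \<alpha>) (Mn \<alpha>) w)"
    unfolding spectrum using p(3) n(3) by (rule Bochner_Integration.integrable_diff)
  show "(\<integral>x. corr \<alpha> x * gaussian (1/e) (x - a) \<partial>lborel) =
      Re (\<integral>w. i_omega_pow \<alpha> w * smoothed_spectrum e a w * schar (Mp \<alpha>) (Mn \<alpha>) w \<partial>lborel)"
    unfolding corr_kernel spectrum
    by (simp add: Bochner_Integration.integral_diff[OF p(2) n(2)]
        Bochner_Integration.integral_diff[OF p(3) n(3)] p(1) n(1))
qed

lemma integral_L_kernel_eq_sum:
  assumes e: "e > 0"
  shows "(\<integral>x. L x * gaussian (1/e) (x - a) \<partial>lborel) =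
         (\<Sum>\<alpha>\<in>multi_indices k. \<integral>x. corr \<alpha> x * gaussian (1/e) (x - a) \<partial>lborel)"
proof -
  have "complex_of_real (\<integral>x. L x * gaussian (1/e) (x - a) \<partial>lborel) =
      (\<integral>w. kernel_spectrum e a w * fourier (\<lambda>x. complex_of_real (L x)) w \<partial>lborel)"
    by (rule integral_gaussian_kernel_eq_fourier[OF e L_integrable])
  also have "\<dots> = (\<integral>w. (\<Sum>\<alpha>\<in>multi_indices k.
      i_omega_pow \<alpha> w * smoothed_spectrum e a w * schar (Mp \<alpha>) (Mn \<alpha>) w) \<partial>lborel)"
  proof (rule integral_cong_AE)
    show "(\<lambda>w. \<Sum>\<alpha>\<in>multi_indices k. i_omega_pow \<alpha> w * smoothed_spectrum e a w * schar (Mp \<alpha>) (Mn \<alpha>) w)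
        \<in> borel_measurable lborel"
      using integral_corr_kernel(3)[OF e] by (auto intro: borel_measurable_sum borel_measurable_integrable)
    show "AE w in lborel. kernel_spectrum e a w * fourier (\<lambda>x. complex_of_real (L x)) w =
        (\<Sum>\<alpha>\<in>multi_indices k. i_omega_pow \<alpha> w * smoothed_spectrum e a w * schar (Mp \<alpha>) (Mn \<alpha>) w)"
      using fourier_L by eventually_elim (simp add: smoothed_spectrum_def sum_distrib_left mult_ac)
  qed (use L_integrable in \<open>simp add: borel_measurable_integrable\<close>)
  also have "\<dots> = (\<Sum>\<alpha>\<in>multi_indices k.
      \<integral>w. i_omega_pow \<alpha> w * smoothed_spectrum e a w * schar (Mp \<alpha>) (Mn \<alpha>) w \<partial>lborel)"
    by (rule Bochner_Integration.integral_sum) (rule integral_corr_kernel(3)[OF e])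
  finally have "(\<integral>x. L x * gaussian (1/e) (x - a) \<partial>lborel) = Re (\<Sum>\<alpha>\<in>multi_indices k.
      \<integral>w. i_omega_pow \<alpha> w * smoothed_spectrum e a w * schar (Mp \<alpha>) (Mn \<alpha>) w \<partial>lborel)"
    by (metis Re_complex_of_real)
  then show ?thesis
    by (simp add: integral_corr_kernel(1)[OF e])
qed

lemma L_eq_sum_corr: "L a = (\<Sum>\<alpha>\<in>multi_indices k. corr \<alpha> a)"
proof -
  let ?h = "\<lambda>x. L x - (\<Sum>\<alpha>\<in>multi_indices k. corr \<alpha> x)"
  have "?h a = 0"
  proof (rule eq_0_if_gaussian_kernel_integrals_eq_0[where h="?h"])
    show "continuous_on UNIV ?h"
      using L_continuous corr_continuous by (intro continuous_on_diff continuous_on_sum) auto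
    show "bounded (range ?h)"
      using L_bounded corr_bounded finite_multi_indices
      by (intro bounded_minus_comp bounded_sum_comp) auto
    fix e :: real
    assume e: "e > 0"
    have "integrable (kernel_measure e a) L"
      using finite_measure_kernel_measure[OF e] sets_kernel_measure L_continuous L_bounded
      by (rule integrable_bounded_continuous)
    then have "integrable lborel (\<lambda>x. L x * gaussian (1/e) (x - a))"
      by (simp add: integrable_kernel_measure_iff borel_measurable_continuous_onI[OF L_continuous])
    then show "(\<integral>x. ?h x * gaussian (1/e) (x - a) \<partial>lborel) = 0"
      using integral_L_kernel_eq_sum[OF e] integral_corr_kernel(2)[OF e]
      by (simp add: left_diff_distrib sum_distrib_right Bochner_Integration.integral_diff
          Bochner_Integration.integral_sum)
  qed
  then show ?thesis
    by simp
qed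

lemma sint_L_eq_sum:
  assumes N: "fin_signed Np Nn"
  shows "sint Np Nn L = (\<Sum>\<alpha>\<in>multi_indices k. sint (Mp \<alpha>) (Mn \<alpha>) (mderiv \<alpha> (conv_signed fV Np Nn)))"
proof -
  have Np: "finite_measure Np" "sets Np = sets borel" and Nn: "finite_measure Nn" "sets Nn = sets borel"
    using N by (auto simp: fin_signed_def)
  have "sint Np Nn L = (\<Sum>\<alpha>\<in>multi_indices k. sint Np Nn (corr \<alpha>))"
    using integrable_bounded_continuous[OF Np corr_continuous corr_bounded]
      integrable_bounded_continuous[OF Nn corr_continuous corr_bounded]
    by (simp add: L_eq_sum_corr sint_def Bochner_Integration.integral_sum sum_subtractf)
  also have "\<dots> = (\<Sum>\<alpha>\<in>multi_indices k. sint (Mp \<alpha>) (Mn \<alpha>) (mderiv \<alpha> (conv_signed fV Np Nn)))"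
  proof (rule sum.cong[OF refl])
    fix \<alpha> :: "'n multi_index"
    assume \<alpha>: "\<alpha> \<in> multi_indices k"
    have "mderiv \<alpha> (conv_signed fV Np Nn) = conv_signed (mderiv \<alpha> fV) Np Nn"
      unfolding mderiv_eq_iter_partial
      by (rule iter_partial_conv_signed[OF N fV_Cbk length_mi_list_le[OF \<alpha>]])
    then show "sint Np Nn (corr \<alpha>) = sint (Mp \<alpha>) (Mn \<alpha>) (mderiv \<alpha> (conv_signed fV Np Nn))"
      unfolding corr_def[abs_def] conv_signed_def[abs_def]
      using sint_translate_swap[OF signed_measures[OF \<alpha>] N mderiv_fV_continuous[OF \<alpha>] mderiv_fV_bounded[OF \<alpha>]]
      by simp
  qed
  finally show ?thesis .
qed

end

lemma integrable_distributed_density: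
  assumes "prob_space M" "distributed M lborel V (\<lambda>v. ennreal (f v))" "\<And>v. f v \<ge> 0"
  shows "integrable lborel f"
  using distributed_integrable[OF assms(2), of "\<lambda>_. 1"] assms(1,3)
  by (simp add: prob_space.finite_measure finite_measure.integrable_const)

lemma charf_distributed:
  fixes V :: "'a \<Rightarrow> real^'n::finite"
  assumes "distributed M lborel V (\<lambda>v. ennreal (f v))" "\<And>v. f v \<ge> 0"
  shows "charf (distr M borel V) = fourier (\<lambda>x. complex_of_real (f x))"
proof
  fix \<omega> :: "real^'n"
  have [measurable]: "f \<in> borel_measurable borel"
    using distributed_real_measurable[OF _ assms(1)] assms(2) by simp
  have "distr M borel V = density lborel (\<lambda>v. ennreal (f v))"
    using distributed_distr_eq_density[OF assms(1)] by (simp cong: distr_cong)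
  then show "charf (distr M borel V) \<omega> = fourier (\<lambda>x. complex_of_real (f x)) \<omega>"
    unfolding charf_def fourier_def using assms(2)
    by (simp add: integral_density scaleR_conv_of_real mult.commute)
qed

lemma conv_meas_eq_conv_signed: "conv_meas f P = conv_signed f P (null_measure borel)"
  by (simp add: fun_eq_iff conv_meas_def conv_signed_def sint_def)

lemma cond_exp_at_eq_sint:
  "cond_exp_at g fV P y = sint P (null_measure borel) (lam g fV y) / conv_meas fV P y"
  by (simp add: cond_exp_at_def sint_def lam_def)

theorem proposition4:
  fixes M :: "'a measure"
    and X V :: "'a \<Rightarrow> real^'n::finite"
    and y :: "real^'n" and k :: nat
    and g fV :: "real^'n \<Rightarrow> real"
    and Mp Mn :: "'n multi_index \<Rightarrow> (real^'n) measure"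
  assumes "prob_space M"
    and "g \<in> borel_measurable borel"
    and "X \<in> borel_measurable M" and "V \<in> borel_measurable M"
    and "prob_space.indep_var M borel X borel V"
    and "distributed M lborel V (\<lambda>v. ennreal (fV v))"
    and "\<forall>v. fV v \<ge> 0"
    and "C0k k fV"
    and "AE \<omega> in lborel. charf (distr M borel V) \<omega> \<noteq> 0"
    and "continuous_on UNIV (lam g fV y)"
    and "(lam g fV y \<longlongrightarrow> 0) at_infinity"
    and "integrable lborel (lam g fV y)"
    and "integrable lborel (fourier (\<lambda>x. complex_of_real (lam g fV y x)))"
    and "\<forall>\<alpha>\<in>multi_indices k. fin_signed (Mp \<alpha>) (Mn \<alpha>)"
    and "AE \<omega> in lborel. Qfun g fV (distr M borel V) y \<omega> =
           (\<Sum>\<alpha>\<in>multi_indices k. i_omega_pow \<alpha> \<omega> * schar (Mp \<alpha>) (Mn \<alpha>) \<omega>)"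
  shows "(\<forall>Np Nn. fin_signed Np Nn \<longrightarrow>
            sint Np Nn (lam g fV y) =
            (\<Sum>\<alpha>\<in>multi_indices k. sint (Mp \<alpha>) (Mn \<alpha>) (mderiv \<alpha> (conv_signed fV Np Nn))))
       \<and> (conv_meas fV (distr M borel X) y > 0 \<longrightarrow>
            cond_exp_at g fV (distr M borel X) y =
            (\<Sum>\<alpha>\<in>multi_indices k. sint (Mp \<alpha>) (Mn \<alpha>)
                 (mderiv \<alpha> (conv_meas fV (distr M borel X)))) / conv_meas fV (distr M borel X) y)"
proof -
  interpret M: prob_space M by fact
  have charf_V: "charf (distr M borel V) = fourier (\<lambda>x. complex_of_real (fV x))"
    using assms(6,7) by (intro charf_distributed) auto
  have "AE \<omega> in lborel. fourier (\<lambda>x. complex_of_real (lam g fV y x)) \<omega> =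
      fourier (\<lambda>x. complex_of_real (fV x)) (- \<omega>) *
      (\<Sum>\<alpha>\<in>multi_indices k. i_omega_pow \<alpha> \<omega> * schar (Mp \<alpha>) (Mn \<alpha>) \<omega>)"
    using AE_lborel_uminus[OF assms(9)] assms(15)
    by eventually_elim (simp add: Qfun_def charf_V field_simps)
  moreover have "integrable lborel fV"
    using integrable_distributed_density[OF assms(1,6)] assms(7) by simp
  ultimately interpret fourier_deconvolution fV "lam g fV y" k Mp Mn
    using assms(8,10-12,14) bounded_range_if_tendsto_0_at_infinity C0k_imp_Cbk
    by unfold_locales auto
  have "fin_signed (distr M borel X) (null_measure borel)"
    using M.prob_space_distr[of X borel] assms(3)
    by (intro fin_signed_null_measure) (auto intro: prob_space.finite_measure)
  then show ?thesis
    using sint_L_eq_sum by (simp add: cond_exp_at_eq_sint conv_meas_eq_conv_signed)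
qed

end
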